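(* Let $n\ge 5$ and $t\ge 0$ be integers, and let $G$ be a cactus with $n$ vertices and exactly $t$ cycles. Then $$SO(G)\le (n-2t-1)\sqrt{(n-1)^{2}+1}+2t\sqrt{(n-1)^{2}+4}+2\sqrt{2}\,t,$$ with equality if and only if $G\cong H(n,t)$.
   Context: All graphs are finite, simple and connected. For a graph $G$, $d_u$ denotes the degree of vertex $u$, and the Sombor index is $SO(G)=\sum_{uv\in E(G)}\sqrt{d_u^2+d_v^2}$. A cactus is a connected graph in which any two cycles have at most one common vertex. For integers $n,t$ with $n\ge 2t+1$, $H(n,t)$ denotes the graph obtained from the star $K_{1,n-1}$ with center $c$ by adding $t$ pairwise disjoint edges among its leaves; equivalently, it consists of $t$ triangles sharing the single common vertex $c$, together with $n-2t-1$ pendant vertices attached to $c$. *)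

theory Defs
  imports Complex_Main
begin

definition simple_graph :: "'a set \<Rightarrow> 'a set set \<Rightarrow> bool" where
  "simple_graph V E \<longleftrightarrow> finite V \<and> (\<forall>e\<in>E. e \<subseteq> V \<and> card e = 2)"

definition adj :: "'a set set \<Rightarrow> 'a \<Rightarrow> 'a \<Rightarrow> bool" where
  "adj E u v \<longleftrightarrow> {u, v} \<in> E"

definition connected_graph :: "'a set \<Rightarrow> 'a set set \<Rightarrow> bool" where
  "connected_graph V E \<longleftrightarrow> V \<noteq> {} \<and> (\<forall>u\<in>V. \<forall>v\<in>V. (adj E)\<^sup>*\<^sup>* u v)"

definition degree :: "'a set set \<Rightarrow> 'a \<Rightarrow> nat" where
  "degree E u = card {e \<in> E. u \<in> e}"

definition sombor :: "'a set set \<Rightarrow> real" where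
  "sombor E = (\<Sum>e\<in>E. sqrt (\<Sum>u\<in>e. (real (degree E u))\<^sup>2))"

definition is_cycle :: "'a set set \<Rightarrow> 'a set set \<Rightarrow> bool" where
  "is_cycle E C \<longleftrightarrow> (\<exists>vs. length vs \<ge> 3 \<and> distinct vs \<and>
      C = {{vs ! i, vs ! ((i + 1) mod length vs)} | i. i < length vs} \<and> C \<subseteq> E)"

definition cycles :: "'a set set \<Rightarrow> 'a set set set" where
  "cycles E = {C. is_cycle E C}"

definition cactus :: "'a set \<Rightarrow> 'a set set \<Rightarrow> bool" where
  "cactus V E \<longleftrightarrow> simple_graph V E \<and> connected_graph V E \<and>
     (\<forall>C1\<in>cycles E. \<forall>C2\<in>cycles E. C1 \<noteq> C2 \<longrightarrow> card (\<Union>C1 \<inter> \<Union>C2) \<le> 1)"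

definition graph_iso :: "'a set \<Rightarrow> 'a set set \<Rightarrow> 'b set \<Rightarrow> 'b set set \<Rightarrow> bool" where
  "graph_iso V E W F \<longleftrightarrow> (\<exists>f. bij_betw f V W \<and>
      (\<forall>u\<in>V. \<forall>v\<in>V. {u, v} \<in> E \<longleftrightarrow> {f u, f v} \<in> F))"

text \<open>H(n,t): vertices 0..n-1, centre 0, star edges {0,i}, plus the t disjoint
  leaf edges {2j-1, 2j} for j = 1..t.\<close>
definition H_vertices :: "nat \<Rightarrow> nat set" where
  "H_vertices n = {0..<n}"

definition H_edges :: "nat \<Rightarrow> nat \<Rightarrow> nat set set" where
  "H_edges n t = {{0, i} | i. 1 \<le> i \<and> i < n} \<union> {{2*j - 1, 2*j} | j. 1 \<le> j \<and> j \<le> t}"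

end

(*
  Split the edges of the cactus into bridges and the edge sets of its cycles, which are
  edge-disjoint. A bridge uv has d(u) + d(v) <= n, so its term is at most sqrt((n-1)^2 + 1).
  Along a cycle of length l every degree is at least 2, and since a vertex outside the cycle is
  adjacent to at most one of its vertices, the degrees sum to at most n + l; the cycle then
  contributes at most (l - 3) sqrt((n-1)^2 + 1) + 2 sqrt((n-1)^2 + 4) + 2 sqrt 2, strictly less
  unless l = 3. Adding up and using |E| <= n - 1 + t gives the bound.
  In the equality case every bridge and every cycle contains a vertex of degree n - 1, which is
  unique for n >= 5; the edges avoiding it form a matching, so G is a star with t disjoint
  edges added among its leaves, i.e. H(n, t).
*)
theory Submission
  imports Defs "HOL-Analysis.Convex"
begin

section \<open>Estimates for the edge term \<open>sqrt (x\<^sup>2 + y\<^sup>2)\<close>\<close>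

definition sombor_term :: "real \<Rightarrow> real \<Rightarrow> real" where
  "sombor_term x y = sqrt (x\<^sup>2 + y\<^sup>2)"

lemma sombor_term_eq_cmod: "sombor_term x y = cmod (Complex x y)"
  by (simp add: sombor_term_def complex_norm)

lemma sombor_term_commute: "sombor_term x y = sombor_term y x"
  by (simp add: sombor_term_def add.commute)

lemma sombor_term_2_2: "sombor_term 2 2 = 2 * sqrt 2"
proof -
  have "sombor_term 2 2 = sqrt (2\<^sup>2 * 2)" by (simp add: sombor_term_def)
  also have "\<dots> = 2 * sqrt 2" by (simp only: real_sqrt_mult real_sqrt_abs)
  finally show ?thesis .
qed

lemma sombor_term_ge: "0 \<le> x \<Longrightarrow> x \<le> sombor_term x y"
  unfolding sombor_term_def by (rule real_le_rsqrt) simp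

lemma sombor_term_mono: "0 \<le> x \<Longrightarrow> x \<le> x' \<Longrightarrow> sombor_term x y \<le> sombor_term x' y"
  unfolding sombor_term_def by (simp add: power_mono)

lemma sombor_term_strict_mono: "0 \<le> x \<Longrightarrow> x < x' \<Longrightarrow> sombor_term x y < sombor_term x' y"
  unfolding sombor_term_def by (simp add: power_strict_mono)

lemma sombor_term_shift_radicand:
  fixes a b k :: real
  shows "(a + b - k)\<^sup>2 + k\<^sup>2 = a\<^sup>2 + b\<^sup>2 + 2 * ((a - k) * (b - k))"
  by (simp add: power2_eq_square algebra_simps)

lemma sombor_term_le_shift:
  "0 \<le> (a - k) * (b - k) \<Longrightarrow> sombor_term a b \<le> sombor_term (a + b - k) k"
  unfolding sombor_term_def sombor_term_shift_radicand by simp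

lemma sombor_term_less_shift:
  "0 < (a - k) * (b - k) \<Longrightarrow> sombor_term a b < sombor_term (a + b - k) k"
  unfolding sombor_term_def sombor_term_shift_radicand by simp

lemma sombor_term_le_add:
  assumes "k \<le> a" "k \<le> b"
  shows "sombor_term a b \<le> sombor_term k k + (a - k) + (b - k)"
proof -
  have "Complex a b = Complex k k + Complex (a - k) 0 + Complex 0 (b - k)"
    by (simp add: complex_eq_iff)
  then have "cmod (Complex a b) \<le> cmod (Complex k k) + cmod (Complex (a - k) 0) + cmod (Complex 0 (b - k))"
    by (metis norm_triangle_le order_refl add_mono)
  then show ?thesis
    using assms by (simp add: sombor_term_eq_cmod complex_norm)
qed

lemma convex_on_sombor_term: "convex_on UNIV (\<lambda>x. sombor_term x c)"
proof (rule convex_onI)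
  fix t x y :: real assume "0 < t" "t < 1"
  have "Complex ((1 - t) *\<^sub>R x + t *\<^sub>R y) c = (1 - t) *\<^sub>R Complex x c + t *\<^sub>R Complex y c"
    by (simp add: complex_eq_iff algebra_simps)
  then have "cmod (Complex ((1 - t) *\<^sub>R x + t *\<^sub>R y) c) \<le> (1 - t) * cmod (Complex x c) + t * cmod (Complex y c)"
    using \<open>0 < t\<close> \<open>t < 1\<close> by (metis norm_triangle_le order_refl add_mono norm_scaleR abs_of_pos diff_gt_0_iff_gt)
  then show "sombor_term ((1 - t) *\<^sub>R x + t *\<^sub>R y) c \<le> (1 - t) * sombor_term x c + t * sombor_term y c"
    by (simp add: sombor_term_eq_cmod)
qed simp

lemma convex_on_add_le_spread:
  fixes g :: "real \<Rightarrow> real"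
  assumes g: "convex_on UNIV g" and "m \<le> a" "m \<le> b"
  shows "g a + g b \<le> g m + g (a + b - m)"
proof (cases "a + b = 2 * m")
  case True
  then have "a = m" "b = m" using assms by linarith+
  then show ?thesis by simp
next
  case False
  define t where "t = (a - m) / (a + b - 2 * m)"
  have t: "0 \<le> t" "t \<le> 1" using assms False by (auto simp: t_def field_simps)
  have "t * (a + b - 2 * m) = a - m"
    using False by (simp add: t_def)
  then have a: "a = (1 - t) *\<^sub>R m + t *\<^sub>R (a + b - m)" and b: "b = t *\<^sub>R m + (1 - t) *\<^sub>R (a + b - m)"
    by (simp_all add: algebra_simps)
  have "g a \<le> (1 - t) * g m + t * g (a + b - m)"
    by (subst a) (rule convex_onD[OF g t]; simp)
  moreover have "g b \<le> t * g m + (1 - t) * g (a + b - m)"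
    using convex_onD[OF g, of "1 - t" m "a + b - m"] t by (subst b) simp
  ultimately show ?thesis by (simp add: algebra_simps)
qed

text \<open>Move degree onto a single vertex: first merge \<open>a\<close> and \<open>b\<close> into \<open>p = a + b - 2\<close>, then
  \<open>p\<close> and \<open>c\<close>; each merge is a shift (\<open>sombor_term_le_shift\<close>) or a spread of a convex function.\<close>
lemma sombor_term_triangle_le:
  fixes a b c d :: real
  assumes a: "2 \<le> a" and b: "2 \<le> b" and c: "2 \<le> c" and sum: "a + b + c \<le> d + 4"
  shows "sombor_term a b + sombor_term b c + sombor_term c a \<le> 2 * sombor_term d 2 + sombor_term 2 2"
    and "sombor_term a b + sombor_term b c + sombor_term c a = 2 * sombor_term d 2 + sombor_term 2 2 \<Longrightarrow>
         a + b + c = d + 4 \<and> ((b = 2 \<and> c = 2) \<or> (c = 2 \<and> a = 2) \<or> (a = 2 \<and> b = 2))"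
proof -
  define p where "p = a + b - 2"
  have p: "2 \<le> p" using a b by (simp add: p_def)
  have pc_sum: "p + c - 2 = a + b + c - 4" by (simp add: p_def)
  have ab: "sombor_term a b \<le> sombor_term p 2"
    using sombor_term_le_shift[of a 2 b] a b by (simp add: p_def)
  have ab_strict: "0 < (a - 2) * (b - 2) \<Longrightarrow> sombor_term a b < sombor_term p 2"
    using sombor_term_less_shift[of a 2 b] by (simp add: p_def)
  have bc_ca: "sombor_term c a + sombor_term b c \<le> sombor_term 2 c + sombor_term p c"
    using convex_on_add_le_spread[OF convex_on_sombor_term a b, of c]
    by (simp add: p_def sombor_term_commute)
  have pc: "sombor_term p c \<le> sombor_term (a + b + c - 4) 2"
    using sombor_term_le_shift[of p 2 c, unfolded pc_sum] p c by simp
  have pc_strict: "0 < (p - 2) * (c - 2) \<Longrightarrow> sombor_term p c < sombor_term (a + b + c - 4) 2"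
    using sombor_term_less_shift[of p 2 c, unfolded pc_sum] .
  have p2_c2: "sombor_term p 2 + sombor_term c 2 \<le> sombor_term 2 2 + sombor_term (a + b + c - 4) 2"
    using convex_on_add_le_spread[OF convex_on_sombor_term p c, of 2, unfolded pc_sum] .
  have top: "sombor_term (a + b + c - 4) 2 \<le> sombor_term d 2"
    using a b c sum by (intro sombor_term_mono) auto
  have top_strict: "a + b + c < d + 4 \<Longrightarrow> sombor_term (a + b + c - 4) 2 < sombor_term d 2"
    using a b c by (intro sombor_term_strict_mono) auto
  show "sombor_term a b + sombor_term b c + sombor_term c a \<le> 2 * sombor_term d 2 + sombor_term 2 2"
    using ab bc_ca pc p2_c2 top sombor_term_commute[of 2 c] by linarith
  assume eq: "sombor_term a b + sombor_term b c + sombor_term c a = 2 * sombor_term d 2 + sombor_term 2 2"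
  have "\<not> 0 < (a - 2) * (b - 2)" "\<not> 0 < (p - 2) * (c - 2)" "\<not> a + b + c < d + 4"
    using eq ab ab_strict bc_ca pc pc_strict p2_c2 top top_strict sombor_term_commute[of 2 c]
    by linarith+
  moreover have "0 \<le> (a - 2) * (b - 2)" "0 \<le> (p - 2) * (c - 2)" using a b c p by simp_all
  ultimately have "(a - 2) * (b - 2) = 0" "(p - 2) * (c - 2) = 0" "a + b + c = d + 4"
    using sum by linarith+
  then show "a + b + c = d + 4 \<and> ((b = 2 \<and> c = 2) \<or> (c = 2 \<and> a = 2) \<or> (a = 2 \<and> b = 2))"
    using a b by (auto simp: p_def)
qed

lemma sum_lessThan_rotate:
  fixes g :: "nat \<Rightarrow> 'a::comm_monoid_add"
  assumes "0 < l"
  shows "(\<Sum>i<l. g ((i + 1) mod l)) = (\<Sum>i<l. g i)"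
proof -
  obtain m where l: "l = Suc m" using assms by (cases l) auto
  have "(\<Sum>i<l. g ((i + 1) mod l)) = (\<Sum>i<m. g (Suc i)) + g 0"
    unfolding l sum.lessThan_Suc by (simp add: mod_Suc)
  also have "\<dots> = (\<Sum>i<l. g i)"
    unfolding l sum.lessThan_Suc_shift by (simp add: add.commute)
  finally show ?thesis .
qed

text \<open>The contributions, in \<open>H(n, t)\<close>, of a pendant edge at the centre and of a triangle.\<close>
definition pendant_edge_weight :: "nat \<Rightarrow> real" where
  "pendant_edge_weight n = sombor_term (real n - 1) 1"

definition triangle_weight :: "nat \<Rightarrow> real" where
  "triangle_weight n = 2 * sombor_term (real n - 1) 2 + sombor_term 2 2"

text \<open>Each term is at most \<open>d\<^sub>i + d\<^sub>i\<^sub>+\<^sub>1 - 4 + 2\<surd>2\<close> (by \<open>sombor_term_le_add\<close>);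
  summing, the budget wins because \<open>2\<surd>2 < 3\<close>.\<close>
lemma sombor_term_cyclic_sum_less:
  fixes d :: "nat \<Rightarrow> real" and l n :: nat
  assumes l: "4 \<le> l" and n: "5 \<le> n" and d: "\<And>i. i < l \<Longrightarrow> 2 \<le> d i"
    and dsum: "(\<Sum>i<l. d i) \<le> real n + real l"
  shows "(\<Sum>i<l. sombor_term (d i) (d ((i + 1) mod l)))
           < (real l - 3) * pendant_edge_weight n + triangle_weight n"
proof -
  have "(\<Sum>i<l. sombor_term (d i) (d ((i + 1) mod l)))
          \<le> (\<Sum>i<l. sombor_term 2 2 + (d i - 2) + (d ((i + 1) mod l) - 2))"
    using l by (intro sum_mono sombor_term_le_add d) auto
  also have "\<dots> = real l * sombor_term 2 2 + (\<Sum>i<l. d i) + (\<Sum>i<l. d ((i + 1) mod l)) - 4 * real l"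
    by (simp add: sum.distrib sum_subtractf)
  also have "\<dots> = real l * sombor_term 2 2 + 2 * (\<Sum>i<l. d i) - 4 * real l"
    using l sum_lessThan_rotate[of l d] by simp
  finally have upper: "(\<Sum>i<l. sombor_term (d i) (d ((i + 1) mod l)))
      \<le> real l * sombor_term 2 2 + 2 * real n - 2 * real l"
    using dsum by linarith
  have s22: "sombor_term 2 2 < 3"
    using real_sqrt_less_mono[of 8 9] by (simp add: sombor_term_def)
  have "(real l - 1) * sombor_term 2 2 < (real l - 1) * 3"
    using s22 l by (intro mult_strict_left_mono) auto
  moreover have "3 \<le> (real l - 3) * (real n - 2)"
    using l n mult_mono[of 1 "real l - 3" 3 "real n - 2"] by simp
  moreover have "real n - 1 \<le> sombor_term (real n - 1) 1" "real n - 1 \<le> sombor_term (real n - 1) 2"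
    using n by (simp_all add: sombor_term_ge)
  moreover have "(real l - 3) * (real n - 1) \<le> (real l - 3) * sombor_term (real n - 1) 1"
    using l calculation(3) by (intro mult_left_mono) auto
  ultimately show ?thesis
    using upper by (simp add: pendant_edge_weight_def triangle_weight_def algebra_simps)
qed

section \<open>Simple graphs\<close>

lemma two_elementsE:
  assumes "2 \<le> card A"
  obtains x y where "x \<in> A" "y \<in> A" "x \<noteq> y"
proof -
  have "finite A" using assms card.infinite by force
  then show thesis using card_le_Suc0_iff_eq[of A] assms that by auto
qed

definition neighbours :: "'a set set \<Rightarrow> 'a \<Rightarrow> 'a set" where
  "neighbours E u = {w. {u, w} \<in> E}"

lemma in_neighbours_iff [simp]: "w \<in> neighbours E u \<longleftrightarrow> {u, w} \<in> E"
  by (simp add: neighbours_def)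

locale finite_simple_graph =
  fixes V :: "'a set" and E :: "'a set set"
  assumes simple: "simple_graph V E"
begin

lemma finite_vertices: "finite V"
  using simple by (simp add: simple_graph_def)

lemma edge_subset_card: "e \<in> E \<Longrightarrow> e \<subseteq> V \<and> card e = 2"
  using simple by (simp add: simple_graph_def)

lemma finite_edges: "finite E"
  using finite_vertices edge_subset_card by (meson Pow_iff finite_Pow_iff finite_subset subsetI)

lemma edgeE:
  assumes "e \<in> E"
  obtains x y where "x \<noteq> y" "e = {x, y}" "x \<in> V" "y \<in> V"
  using edge_subset_card[OF assms] by (metis card_2_iff insert_subset)

lemma singleton_not_edge [simp]: "{u} \<notin> E"
  using edge_subset_card by fastforce

lemma edge_distinct: "{u, w} \<in> E \<Longrightarrow> u \<noteq> w"
  by auto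

lemma edge_vertices: "{u, w} \<in> E \<Longrightarrow> u \<in> V \<and> w \<in> V"
  using edge_subset_card by fastforce

lemma neighbours_subset: "neighbours E u \<subseteq> V - {u}"
  by (auto dest: edge_vertices)

lemma finite_neighbours: "finite (neighbours E u)"
  using neighbours_subset finite_vertices finite_subset by blast

lemma degree_eq_card_neighbours: "degree E u = card (neighbours E u)"
proof -
  have "{e \<in> E. u \<in> e} = (\<lambda>w. {u, w}) ` neighbours E u"
  proof (intro equalityI subsetI)
    fix e assume "e \<in> {e \<in> E. u \<in> e}"
    then have e: "e \<in> E" "u \<in> e" by auto
    then obtain w where "e = {u, w}"
      by (metis edgeE insert_commute insertE singletonD)
    with e show "e \<in> (\<lambda>w. {u, w}) ` neighbours E u" by auto
  qed auto
  moreover have "inj_on (\<lambda>w. {u, w}) (neighbours E u)"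
    by (auto simp: inj_on_def doubleton_eq_iff dest: edge_distinct)
  ultimately show ?thesis
    by (simp add: degree_def card_image)
qed

lemma one_le_degree: "{u, v} \<in> E \<Longrightarrow> 1 \<le> degree E u"
  using finite_neighbours[of u] by (auto simp: degree_eq_card_neighbours Suc_le_eq card_gt_0_iff)

lemma edge_if_full_degree:
  assumes "u \<in> V" "degree E u = card V - 1" "w \<in> V" "w \<noteq> u"
  shows "{u, w} \<in> E"
proof -
  have "neighbours E u = V - {u}"
    using assms(1,2) finite_vertices neighbours_subset
    by (intro card_subset_eq) (auto simp: degree_eq_card_neighbours)
  then have "w \<in> neighbours E u" using assms(3,4) by blast
  then show ?thesis by simp
qed

end

section \<open>Paths and cycles\<close>

fun path_edges :: "'a list \<Rightarrow> 'a set set" where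
  "path_edges (x # y # zs) = insert {x, y} (path_edges (y # zs))"
| "path_edges _ = {}"

lemma path_edges_append:
  "xs \<noteq> [] \<Longrightarrow> path_edges (xs @ ys) = path_edges xs \<union> path_edges (last xs # ys)"
  by (induction xs rule: path_edges.induct) auto

lemma path_edges_subset_Cons: "path_edges ys \<subseteq> path_edges (x # ys)"
  by (cases ys) auto

lemma path_edges_subset_append:
  "path_edges xs \<subseteq> path_edges (xs @ ys)" "path_edges ys \<subseteq> path_edges (xs @ ys)"
  using path_edges_append[of xs ys] path_edges_subset_Cons[of ys "last xs"] by (cases "xs = []"; auto)+

lemma path_edges_Cons: "p \<noteq> [] \<Longrightarrow> path_edges (y # p) = insert {y, hd p} (path_edges p)"
  by (cases p) auto

lemma path_edges_take_subset: "path_edges (take m p) \<subseteq> path_edges p"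
  using path_edges_subset_append(1)[of "take m p" "drop m p"] by simp

lemma path_edges_conv_nth: "path_edges xs = (\<lambda>k. {xs ! k, xs ! Suc k}) ` {..<length xs - 1}"
  by (induction xs rule: path_edges.induct) (auto simp: lessThan_Suc_eq_insert_0 image_image)

definition cycle_edges :: "'a list \<Rightarrow> 'a set set" where
  "cycle_edges vs = (\<lambda>i. {vs ! i, vs ! ((i + 1) mod length vs)}) ` {..<length vs}"

lemma cycle_edges_conv_nth:
  "cycle_edges vs = {{vs ! i, vs ! ((i + 1) mod length vs)} | i. i < length vs}"
  by (auto simp: cycle_edges_def)

lemma is_cycle_iff:
  "is_cycle E C \<longleftrightarrow> (\<exists>vs. 3 \<le> length vs \<and> distinct vs \<and> C = cycle_edges vs \<and> C \<subseteq> E)"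
  by (simp only: is_cycle_def cycle_edges_conv_nth)

lemma cycle_edges_conv_path_edges:
  assumes "vs \<noteq> []"
  shows "cycle_edges vs = path_edges (vs @ [hd vs])"
proof -
  have "{vs ! i, vs ! ((i + 1) mod length vs)} = {(vs @ [hd vs]) ! i, (vs @ [hd vs]) ! Suc i}"
    if "i < length vs" for i
    using that assms by (auto simp: nth_append hd_conv_nth mod_Suc)
  then show ?thesis
    unfolding cycle_edges_def path_edges_conv_nth by (auto simp: image_iff)
qed

lemma cycle_edges_append:
  "xs \<noteq> [] \<Longrightarrow> cycle_edges (xs @ ys) = path_edges xs \<union> path_edges (last xs # ys @ [hd xs])"
  by (simp add: cycle_edges_conv_path_edges path_edges_append)

lemma cycle_edges_closing: "xs \<noteq> [] \<Longrightarrow> cycle_edges xs = insert {last xs, hd xs} (path_edges xs)"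
  using cycle_edges_append[of xs "[]"] by auto

lemma path_edges_subset_cycle_edges: "path_edges vs \<subseteq> cycle_edges vs"
  by (cases "vs = []") (auto simp: cycle_edges_closing)

lemma cycle_edges_triangle: "cycle_edges [a, b, c] = {{a, b}, {b, c}, {c, a}}"
  by (simp add: cycle_edges_closing insert_commute)

lemma Union_cycle_edges: "\<Union> (cycle_edges vs) = set vs"
  by (auto simp: cycle_edges_def in_set_conv_nth) (metis mod_less_divisor length_pos_if_in_set nth_mem)+

lemma inj_on_cycle_edge:
  assumes vs: "distinct vs" "3 \<le> length vs"
  shows "inj_on (\<lambda>i. {vs ! i, vs ! ((i + 1) mod length vs)}) {..<length vs}"
proof (rule inj_onI, rule ccontr)
  let ?l = "length vs"
  fix i j assume i: "i \<in> {..<?l}" and j: "j \<in> {..<?l}" and "i \<noteq> j"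
    and eq: "{vs ! i, vs ! ((i + 1) mod ?l)} = {vs ! j, vs ! ((j + 1) mod ?l)}"
  have l: "0 < ?l" using vs by linarith
  have "vs ! i \<noteq> vs ! j" using \<open>i \<noteq> j\<close> i j vs by (simp add: nth_eq_iff_index_eq)
  then have "vs ! i = vs ! ((j + 1) mod ?l)" "vs ! ((i + 1) mod ?l) = vs ! j"
    using eq by (auto simp: doubleton_eq_iff)
  then have "i = (j + 1) mod ?l" "j = (i + 1) mod ?l"
    using i j vs l by (simp_all add: nth_eq_iff_index_eq)
  then have "(i + 2) mod ?l = i" by (simp add: mod_Suc_eq)
  then show False using i vs by (auto simp: mod_if split: if_splits)
qed

lemma card_cycle_edges: "distinct vs \<Longrightarrow> 3 \<le> length vs \<Longrightarrow> card (cycle_edges vs) = length vs"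
  unfolding cycle_edges_def using card_image[OF inj_on_cycle_edge[of vs]] by simp

lemma cycle_edges_at:
  assumes vs: "distinct vs" "3 \<le> length vs" and i: "i < length vs"
  shows "{w. {vs ! i, w} \<in> cycle_edges vs}
           = {vs ! ((i + 1) mod length vs), vs ! (if i = 0 then length vs - 1 else i - 1)}"
proof (intro equalityI subsetI)
  let ?l = "length vs"
  fix w assume "w \<in> {w. {vs ! i, w} \<in> cycle_edges vs}"
  then obtain k where k: "k < ?l" "{vs ! i, w} = {vs ! k, vs ! ((k + 1) mod ?l)}"
    by (auto simp: cycle_edges_def)
  then consider "vs ! i = vs ! k" "w = vs ! ((k + 1) mod ?l)" | "vs ! i = vs ! ((k + 1) mod ?l)" "w = vs ! k"
    by (auto simp: doubleton_eq_iff)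
  then show "w \<in> {vs ! ((i + 1) mod ?l), vs ! (if i = 0 then ?l - 1 else i - 1)}"
  proof cases
    case 1
    then show ?thesis using i k vs by (simp add: nth_eq_iff_index_eq)
  next
    case 2
    have "0 < ?l" using vs by linarith
    then have "i = (k + 1) mod ?l" using 2 i k vs by (simp add: nth_eq_iff_index_eq)
    then have "k = (if i = 0 then ?l - 1 else i - 1)" using k by (auto simp: mod_Suc split: if_splits)
    with 2 show ?thesis by simp
  qed
next
  let ?l = "length vs"
  let ?p = "if i = 0 then ?l - 1 else i - 1"
  fix w assume "w \<in> {vs ! ((i + 1) mod ?l), vs ! ?p}"
  moreover have "{vs ! i, vs ! ((i + 1) mod ?l)} \<in> cycle_edges vs"
    using i by (auto simp: cycle_edges_def)
  moreover have "{vs ! ?p, vs ! ((?p + 1) mod ?l)} \<in> cycle_edges vs"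
    using i by (auto simp: cycle_edges_def)
  moreover have "(?p + 1) mod ?l = i" using i by auto
  ultimately show "w \<in> {w. {vs ! i, w} \<in> cycle_edges vs}" by (auto simp: insert_commute)
qed

lemma card_cycle_edges_at:
  assumes vs: "distinct vs" "3 \<le> length vs" and v: "v \<in> set vs"
  shows "card {w. {v, w} \<in> cycle_edges vs} = 2"
proof -
  obtain i where i: "i < length vs" "v = vs ! i" using v by (auto simp: in_set_conv_nth)
  define nx where "nx = (i + 1) mod length vs"
  define pv where "pv = (if i = 0 then length vs - 1 else i - 1)"
  have "nx < length vs" "pv < length vs" "nx \<noteq> pv"
    using i vs by (auto simp: nx_def pv_def mod_Suc)
  then have "vs ! nx \<noteq> vs ! pv" using vs by (simp add: nth_eq_iff_index_eq)
  then show ?thesis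
    using cycle_edges_at[OF vs i(1)] i by (simp add: nx_def pv_def)
qed

lemma cycle_subset_edges: "C \<in> cycles E \<Longrightarrow> C \<subseteq> E"
  by (auto simp: cycles_def is_cycle_def)

lemma cycles_mono: "E' \<subseteq> E \<Longrightarrow> cycles E' \<subseteq> cycles E"
  by (auto simp: cycles_def is_cycle_def)

lemma cycle_edges_in_cycles:
  "3 \<le> length vs \<Longrightarrow> distinct vs \<Longrightarrow> cycle_edges vs \<subseteq> E \<Longrightarrow> cycle_edges vs \<in> cycles E"
  by (auto simp: cycles_def is_cycle_iff)

lemma cyclesE:
  assumes "C \<in> cycles E"
  obtains vs where "3 \<le> length vs" "distinct vs" "C = cycle_edges vs" "C \<subseteq> E"
  using assms by (auto simp: cycles_def is_cycle_iff)

lemma three_le_card_cycle: "C \<in> cycles E \<Longrightarrow> 3 \<le> card C"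
  by (auto elim!: cyclesE simp: card_cycle_edges)

lemma triangle_cycleE:
  assumes "C \<in> cycles E" "card C = 3"
  obtains a b c where "distinct [a, b, c]" "C = cycle_edges [a, b, c]"
proof -
  obtain vs where vs: "3 \<le> length vs" "distinct vs" "C = cycle_edges vs"
    using assms(1) by (blast elim: cyclesE)
  then have "length vs = 3" using assms(2) card_cycle_edges by metis
  then obtain a b c where "vs = [a, b, c]" by (auto simp: numeral_3_eq_3 length_Suc_conv)
  then show thesis using that vs by blast
qed

lemma cycle_edges_rotate3: "cycle_edges [b, c, a] = cycle_edges [a, b, c]"
  by (simp add: cycle_edges_triangle insert_commute)

context finite_simple_graph
begin

text \<open>A longest path cannot be extended at its first vertex, so all neighbours of that vertex
  lie on the path; a second neighbour beyond the next vertex closes a cycle.\<close>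
lemma cycles_ne_if_min_degree:
  assumes "V \<noteq> {}" and deg: "\<And>v. v \<in> V \<Longrightarrow> 2 \<le> degree E v"
  shows "cycles E \<noteq> {}"
proof -
  define is_path where "is_path p \<longleftrightarrow> distinct p \<and> set p \<subseteq> V \<and> p \<noteq> [] \<and> path_edges p \<subseteq> E" for p
  obtain v where "v \<in> V" using assms(1) by blast
  then have "is_path [v]" by (simp add: is_path_def)
  moreover have "length p < Suc (card V)" if "is_path p" for p
    using that card_mono[OF finite_vertices, of "set p"] by (simp add: is_path_def distinct_card)
  ultimately obtain p where p: "is_path p" and longest: "\<And>q. is_path q \<Longrightarrow> length q \<le> length p"
    using Lattices_Big.ex_has_greatest_nat[of is_path "[v]" length] by blast
  have "hd p \<in> V" using p by (auto simp: is_path_def)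
  have on_path: "w \<in> set p" if "w \<in> neighbours E (hd p)" for w
  proof (rule ccontr)
    assume "w \<notin> set p"
    then have "is_path (w # p)"
      using p that edge_vertices by (auto simp: is_path_def path_edges_Cons insert_commute)
    then show False using longest[of "w # p"] by simp
  qed
  have "2 \<le> card (neighbours E (hd p))"
    using deg[OF \<open>hd p \<in> V\<close>] by (simp add: degree_eq_card_neighbours)
  then obtain x y where "x \<in> neighbours E (hd p)" "y \<in> neighbours E (hd p)" "x \<noteq> y"
    by (rule two_elementsE)
  then obtain w where w: "w \<in> neighbours E (hd p)" "w \<noteq> p ! 1" by blast
  then obtain j where j: "j < length p" "w = p ! j" using on_path[OF w(1)] in_set_conv_nth by metis
  have "j \<noteq> 0"
  proof
    assume "j = 0"
    with w j p show False by (simp add: is_path_def hd_conv_nth)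
  qed
  moreover have "j \<noteq> 1" using w j by auto
  ultimately have "2 \<le> j" by linarith
  define c where "c = take (Suc j) p"
  have c: "3 \<le> length c" "distinct c" "hd c = hd p" "last c = w"
    using j p \<open>2 \<le> j\<close> by (auto simp: c_def is_path_def hd_conv_nth last_conv_nth)
  have "cycle_edges c \<subseteq> E"
    using c w p path_edges_take_subset[of "Suc j" p]
    by (auto simp: cycle_edges_closing c_def is_path_def insert_commute)
  then show ?thesis using c cycle_edges_in_cycles by blast
qed

end

lemma card_edges_less_if_acyclic:
  assumes "simple_graph V E" "V \<noteq> {}" "cycles E = {}"
  shows "card E < card V"
  using assms
proof (induction "card V" arbitrary: V E rule: less_induct)
  case less
  interpret finite_simple_graph V E by unfold_locales (rule less.prems(1))
  obtain v where "v \<in> V" "\<not> 2 \<le> degree E v"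
    using cycles_ne_if_min_degree less.prems(2,3) by blast
  then have v: "v \<in> V" "degree E v \<le> 1" by simp_all
  define E' where "E' = {e \<in> E. v \<notin> e}"
  have "E = E' \<union> {e \<in> E. v \<in> e}" "E' \<inter> {e \<in> E. v \<in> e} = {}" by (auto simp: E'_def)
  then have card_E: "card E = card E' + degree E v"
    using finite_edges card_Un_disjoint[of E' "{e \<in> E. v \<in> e}"] by (simp add: degree_def E'_def)
  show ?case
  proof (cases "V - {v} = {}")
    case True
    then have "E = {}" using v by (auto elim: edgeE)
    then show ?thesis using v by (auto simp: card_gt_0_iff finite_vertices)
  next
    case False
    have "simple_graph (V - {v}) E'"
      using less.prems(1) by (auto simp: simple_graph_def E'_def)
    moreover have "cycles E' = {}" using cycles_mono[of E' E] less.prems(3) by (auto simp: E'_def)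
    moreover have "card (V - {v}) < card V" by (rule card_Diff1_less[OF finite_vertices v(1)])
    ultimately have "card E' < card (V - {v})" using less.hyps False by blast
    then show ?thesis using card_E v finite_vertices by simp
  qed
qed

section \<open>Cacti\<close>

locale cactus_graph =
  fixes V :: "'a set" and E :: "'a set set"
  assumes cactus: "cactus V E"

sublocale cactus_graph \<subseteq> finite_simple_graph
  using cactus by unfold_locales (simp add: cactus_def)

context cactus_graph
begin

lemma finite_cycles: "finite (cycles E)"
  using finite_edges cycle_subset_edges by (meson Pow_iff finite_Pow_iff finite_subset subsetI)

lemma cycle_vertices: "C \<in> cycles E \<Longrightarrow> \<Union>C \<subseteq> V"
  using cycle_subset_edges edge_subset_card by blast

lemma cycle_eq_if_two_common:
  assumes "C1 \<in> cycles E" "C2 \<in> cycles E" "x \<noteq> y" "{x, y} \<subseteq> \<Union>C1 \<inter> \<Union>C2"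
  shows "C1 = C2"
proof (rule ccontr)
  assume "C1 \<noteq> C2"
  then have "card (\<Union>C1 \<inter> \<Union>C2) \<le> 1" using cactus assms(1,2) by (auto simp: cactus_def)
  moreover have "finite (\<Union>C1 \<inter> \<Union>C2)"
    using cycle_vertices[OF assms(1)] finite_vertices finite_subset by blast
  ultimately have "card {x, y} \<le> 1" using assms(4) by (meson card_mono order_trans)
  then show False using assms(3) by simp
qed

lemma cycles_disjoint:
  assumes "C1 \<in> cycles E" "C2 \<in> cycles E" "C1 \<noteq> C2"
  shows "C1 \<inter> C2 = {}"
proof (rule ccontr)
  assume "C1 \<inter> C2 \<noteq> {}"
  then obtain e where e: "e \<in> C1" "e \<in> C2" by blast
  then obtain x y where "x \<noteq> y" "e = {x, y}"
    using cycle_subset_edges[OF assms(1)] by (blast elim: edgeE)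
  then have "C1 = C2" using e by (intro cycle_eq_if_two_common[OF assms(1,2)]) auto
  with assms(3) show False by simp
qed

text \<open>A path outside a cycle between two of its vertices closes up, together with an arc
  of the cycle, to a second cycle through these two vertices; in a cactus this second cycle
  must be the first one.\<close>
lemma cycle_shortcut:
  assumes C: "cycle_edges vs \<in> cycles E" "distinct vs" "3 \<le> length vs"
    and ij: "i < j" "j < length vs"
    and ws: "set ws \<inter> set vs = {}" "distinct ws" "path_edges (vs ! j # ws @ [vs ! i]) \<subseteq> E"
    and long: "2 \<le> j - i + length ws"
  shows "ws = [] \<and> i = 0 \<and> j = length vs - 1"
proof -
  define arc where "arc = take (Suc j - i) (drop i vs)"
  have arc: "arc \<noteq> []" "hd arc = vs ! i" "last arc = vs ! j" "length arc = Suc j - i"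
    "set arc \<subseteq> set vs" "distinct arc"
    using ij C(2) by (auto simp: arc_def hd_drop_conv_nth last_conv_nth min_absorb2 dest: in_set_takeD in_set_dropD)
  have "path_edges arc \<subseteq> path_edges (drop i vs)"
    using path_edges_subset_append(1)[of arc] by (metis append_take_drop_id arc_def)
  also have "\<dots> \<subseteq> path_edges vs"
    using path_edges_subset_append(2)[where xs = "take i vs" and ys = "drop i vs"] by simp
  also have "\<dots> \<subseteq> cycle_edges vs"
    by (rule path_edges_subset_cycle_edges)
  finally have "path_edges arc \<subseteq> E" using cycle_subset_edges[OF C(1)] by blast
  define L where "L = arc @ ws"
  have "cycle_edges L \<subseteq> E"
    using ws(3) \<open>path_edges arc \<subseteq> E\<close> arc by (simp add: L_def cycle_edges_append)
  moreover have "distinct L" "3 \<le> length L"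
    using arc ws(1,2) long ij by (auto simp: L_def)
  ultimately have L: "cycle_edges L \<in> cycles E" by (simp add: cycle_edges_in_cycles)
  have "vs ! i \<noteq> vs ! j" using ij C(2) by (simp add: nth_eq_iff_index_eq)
  moreover have "{vs ! i, vs ! j} \<subseteq> \<Union>(cycle_edges L) \<inter> \<Union>(cycle_edges vs)"
    using arc ij by (auto simp: Union_cycle_edges L_def dest: hd_in_set last_in_set)
  ultimately have "cycle_edges L = cycle_edges vs" by (rule cycle_eq_if_two_common[OF L C(1)])
  then have "set L = set vs" "length L = length vs"
    using C \<open>distinct L\<close> \<open>3 \<le> length L\<close>
    by (metis Union_cycle_edges, metis card_cycle_edges)
  moreover from this(1) have "set ws \<subseteq> set vs" by (auto simp: L_def)
  with ws(1) have "ws = []" by (metis Int_absorb2 set_empty)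
  ultimately show ?thesis using arc(4) ij by (simp add: L_def) linarith
qed

lemma cycle_induced:
  assumes C: "cycle_edges vs \<in> cycles E" "distinct vs" "3 \<le> length vs"
    and vw: "v \<in> set vs" "w \<in> set vs" "{v, w} \<in> E"
  shows "{v, w} \<in> cycle_edges vs"
proof -
  have ordered: "{vs ! i, vs ! j} \<in> cycle_edges vs"
    if ij: "i < j" "j < length vs" and e: "{vs ! i, vs ! j} \<in> E" for i j
  proof (cases "j = Suc i")
    case True
    then show ?thesis unfolding cycle_edges_def using ij by (intro image_eqI[of _ _ i]) auto
  next
    case False
    then have "2 \<le> j - i" using ij(1) by linarith
    then have "i = 0 \<and> j = length vs - 1"
      using cycle_shortcut[OF C ij, of "[]"] e by (simp add: insert_commute)
    moreover have "Suc (length vs - 1) = length vs" using ij by simp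
    ultimately show ?thesis unfolding cycle_edges_def using ij
      by (intro image_eqI[of _ _ j]) (auto simp: insert_commute)
  qed
  obtain i j where i: "i < length vs" "v = vs ! i" and j: "j < length vs" "w = vs ! j"
    using vw(1,2) by (auto simp: in_set_conv_nth)
  have "i \<noteq> j" using vw(3) i j edge_distinct by blast
  then consider "i < j" | "j < i" by linarith
  then show ?thesis
    using ordered[of i j] ordered[of j i] vw(3) i j by cases (auto simp: insert_commute)
qed

lemma neighbours_inter_cycle:
  assumes C: "cycle_edges vs \<in> cycles E" "distinct vs" "3 \<le> length vs" and v: "v \<in> set vs"
  shows "neighbours E v \<inter> set vs = {w. {v, w} \<in> cycle_edges vs}"
proof -
  have "w \<in> set vs" if "{v, w} \<in> cycle_edges vs" for w
    using that Union_cycle_edges[of vs] by blast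
  then show ?thesis
    using cycle_induced[OF C v] cycle_subset_edges[OF C(1)] by auto
qed

lemma two_le_degree_on_cycle:
  assumes C: "cycle_edges vs \<in> cycles E" "distinct vs" "3 \<le> length vs" and v: "v \<in> set vs"
  shows "2 \<le> degree E v"
proof -
  have "2 = card (neighbours E v \<inter> set vs)"
    using card_cycle_edges_at[OF C(2,3) v] neighbours_inter_cycle[OF C v] by simp
  also have "\<dots> \<le> degree E v"
    by (simp add: degree_eq_card_neighbours card_mono finite_neighbours)
  finally show ?thesis .
qed

lemma outside_neighbour_of_cycle_unique:
  assumes C: "cycle_edges vs \<in> cycles E" "distinct vs" "3 \<le> length vs"
    and w: "w \<notin> set vs" and uv: "u \<in> set vs" "v \<in> set vs" "{w, u} \<in> E" "{w, v} \<in> E"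
  shows "u = v"
proof -
  have ordered: False if ij: "i < j" "j < length vs" and e: "{w, vs ! i} \<in> E" "{w, vs ! j} \<in> E" for i j
    using cycle_shortcut[OF C ij, of "[w]"] ij w e by (simp add: insert_commute Suc_le_eq)
  obtain i j where i: "i < length vs" "u = vs ! i" and j: "j < length vs" "v = vs ! j"
    using uv(1,2) by (auto simp: in_set_conv_nth)
  then show ?thesis
    using ordered[of i j] ordered[of j i] uv(3,4) by (cases i j rule: linorder_cases) auto
qed

lemma sum_degree_cycle_le:
  assumes C: "cycle_edges vs \<in> cycles E" "distinct vs" "3 \<le> length vs"
  shows "(\<Sum>v\<in>set vs. degree E v) \<le> card V + length vs"
proof -
  let ?S = "set vs"
  have SV: "?S \<subseteq> V"
    using cycle_vertices[OF C(1)] by (simp add: Union_cycle_edges)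
  have card_S: "card ?S = length vs" using C(2) by (simp add: distinct_card)
  have degree: "degree E v = 2 + card (neighbours E v - ?S)" if "v \<in> ?S" for v
    using card_Int_Diff[OF finite_neighbours, of v ?S] card_cycle_edges_at[OF C(2,3) that]
      neighbours_inter_cycle[OF C that] by (simp add: degree_eq_card_neighbours)
  have "(\<Sum>v\<in>?S. card (neighbours E v - ?S)) = card (\<Union>v\<in>?S. neighbours E v - ?S)"
    using outside_neighbour_of_cycle_unique[OF C]
    by (intro card_UN_disjoint[symmetric]) (auto simp: finite_neighbours insert_commute)
  also have "\<dots> \<le> card (V - ?S)"
    using neighbours_subset by (intro card_mono) (auto simp: finite_vertices)
  also have "\<dots> = card V - length vs"
    using SV card_S finite_vertices by (simp add: card_Diff_subset finite_subset)
  finally have "(\<Sum>v\<in>?S. card (neighbours E v - ?S)) \<le> card V - length vs" .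
  moreover have "length vs \<le> card V"
    using card_S card_mono[OF finite_vertices SV] by simp
  moreover have "(\<Sum>v\<in>?S. degree E v) = (\<Sum>v\<in>?S. 2 + card (neighbours E v - ?S))"
    by (rule sum.cong[OF refl degree])
  ultimately show ?thesis
    by (simp only: sum.distrib sum_constant card_S) simp
qed

lemma bridge_degree_sum_le:
  assumes e: "{u, v} \<in> E" "{u, v} \<notin> \<Union>(cycles E)"
  shows "degree E u + degree E v \<le> card V"
proof -
  have "neighbours E u \<inter> neighbours E v = {}"
  proof (rule ccontr)
    assume "neighbours E u \<inter> neighbours E v \<noteq> {}"
    then obtain w where w: "{u, w} \<in> E" "{v, w} \<in> E" by auto
    then have "cycle_edges [u, v, w] \<in> cycles E"
      using e(1) edge_distinct
      by (intro cycle_edges_in_cycles) (auto simp: cycle_edges_triangle insert_commute)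
    then show False using e(2) by (auto simp: cycle_edges_triangle)
  qed
  then have "degree E u + degree E v = card (neighbours E u \<union> neighbours E v)"
    by (simp add: degree_eq_card_neighbours card_Un_disjoint finite_neighbours)
  also have "\<dots> \<le> card V"
    using neighbours_subset by (intro card_mono finite_vertices) blast
  finally show ?thesis .
qed

text \<open>Deleting one edge from every cycle leaves a forest; since the cycles are edge-disjoint
  exactly one edge per cycle is deleted.\<close>
lemma card_edges_le: "card E + 1 \<le> card V + card (cycles E)"
proof -
  define pick where "pick C = (SOME e. e \<in> C)" for C :: "'a set set"
  have pick: "pick C \<in> C" if "C \<in> cycles E" for C
    using three_le_card_cycle[OF that] unfolding pick_def by (metis card.empty ex_in_conv not_numeral_le_zero someI_ex)
  have inj: "inj_on pick (cycles E)"
    using pick cycles_disjoint by (fastforce simp: inj_on_def)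
  have R: "pick ` cycles E \<subseteq> E" using pick cycle_subset_edges by blast
  have "cycles (E - pick ` cycles E) = {}"
  proof -
    have "C \<notin> cycles (E - pick ` cycles E)" if "C \<in> cycles E" for C
      using that pick[OF that] cycle_subset_edges[of C "E - pick ` cycles E"] by blast
    then show ?thesis using cycles_mono[of "E - pick ` cycles E" E] by blast
  qed
  moreover have "simple_graph V (E - pick ` cycles E)" using simple by (simp add: simple_graph_def)
  moreover have "V \<noteq> {}" using cactus by (simp add: cactus_def connected_graph_def)
  ultimately have "card (E - pick ` cycles E) < card V" using card_edges_less_if_acyclic by blast
  moreover have "card (E - pick ` cycles E) = card E - card (cycles E)"
    using R inj finite_edges by (simp add: card_Diff_subset finite_subset card_image)
  moreover have "card (cycles E) \<le> card E"
    using R inj finite_edges by (metis card_image card_mono)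
  ultimately show ?thesis by linarith
qed

lemma edges_ne: "2 \<le> card V \<Longrightarrow> E \<noteq> {}"
proof -
  assume "2 \<le> card V"
  then obtain u v where "u \<in> V" "v \<in> V" "u \<noteq> v" by (rule two_elementsE)
  moreover from this have "(adj E)\<^sup>*\<^sup>* u v"
    using cactus by (simp add: cactus_def connected_graph_def)
  ultimately obtain w where "adj E u w" by (blast elim: converse_rtranclpE)
  then show "E \<noteq> {}" by (auto simp: adj_def)
qed

lemma card_Union_cycles: "card (\<Union>(cycles E)) = (\<Sum>C\<in>cycles E. card C)"
proof (rule card_Union_disjoint)
  show "pairwise disjnt (cycles E)"
    using cycles_disjoint by (auto simp: pairwise_def disjnt_def)
  show "finite C" if "C \<in> cycles E" for C
    using finite_subset[OF cycle_subset_edges[OF that] finite_edges] .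
qed

lemma two_mul_card_cycles_less: "2 * card (cycles E) < card V"
proof -
  have "(\<Sum>C\<in>cycles E. 3) \<le> (\<Sum>C\<in>cycles E. card C)"
    by (rule sum_mono) (rule three_le_card_cycle)
  then have "3 * card (cycles E) \<le> card (\<Union>(cycles E))" by (simp add: card_Union_cycles)
  also have "\<dots> \<le> card E"
    using cycle_subset_edges by (intro card_mono[OF finite_edges]) blast
  finally show ?thesis using card_edges_le by linarith
qed

lemma full_degree_unique:
  assumes "4 \<le> card V" and u: "u \<in> V" "degree E u = card V - 1" and v: "v \<in> V" "degree E v = card V - 1"
  shows "u = v"
proof (rule ccontr)
  assume "u \<noteq> v"
  have "2 \<le> card (V - {u, v})"
    using assms \<open>u \<noteq> v\<close> finite_vertices by (simp add: card_Diff_subset)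
  then obtain w1 w2 where w: "w1 \<in> V - {u, v}" "w2 \<in> V - {u, v}" "w1 \<noteq> w2"
    by (rule two_elementsE)
  have triangle: "cycle_edges [u, v, w] \<in> cycles E" if w: "w \<in> V - {u, v}" for w
  proof (intro cycle_edges_in_cycles)
    have "{u, v} \<in> E" "{u, w} \<in> E" "{v, w} \<in> E"
      using edge_if_full_degree[OF u] edge_if_full_degree[OF v] w v(1) \<open>u \<noteq> v\<close> by auto
    then show "cycle_edges [u, v, w] \<subseteq> E" by (simp add: cycle_edges_triangle insert_commute)
  qed (use w \<open>u \<noteq> v\<close> in auto)
  have "cycle_edges [u, v, w1] = cycle_edges [u, v, w2]"
    using triangle[OF w(1)] triangle[OF w(2)] \<open>u \<noteq> v\<close>
    by (intro cycle_eq_if_two_common) (auto simp: Union_cycle_edges)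
  then have "w2 \<in> set [u, v, w1]" by (metis Union_cycle_edges list.set_intros(1) list.set_intros(2))
  then show False using w by auto
qed

end

section \<open>The Sombor index of a cactus\<close>

definition sombor_edge :: "'a set set \<Rightarrow> 'a set \<Rightarrow> real" where
  "sombor_edge E e = sqrt (\<Sum>u\<in>e. (real (degree E u))\<^sup>2)"

lemma sombor_eq_sum_sombor_edge: "sombor E = (\<Sum>e\<in>E. sombor_edge E e)"
  by (simp add: sombor_def sombor_edge_def)

lemma sombor_edge_doubleton:
  "u \<noteq> v \<Longrightarrow> sombor_edge E {u, v} = sombor_term (degree E u) (degree E v)"
  by (simp add: sombor_edge_def sombor_term_def)

lemma sum_nth_eq_sum_set: "distinct xs \<Longrightarrow> (\<Sum>i<length xs. f (xs ! i)) = (\<Sum>x\<in>set xs. f x)"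
  by (simp add: sum_list_sum_nth[of "map f xs", simplified] atLeast0LessThan
      flip: sum_list_distinct_conv_sum_set)

lemma sum_sombor_edge_cycle:
  assumes "distinct vs" "3 \<le> length vs"
  shows "(\<Sum>e\<in>cycle_edges vs. sombor_edge E e)
           = (\<Sum>i<length vs. sombor_term (degree E (vs ! i)) (degree E (vs ! ((i + 1) mod length vs))))"
proof -
  have "vs ! i \<noteq> vs ! ((i + 1) mod length vs)" if "i < length vs" for i
  proof -
    have "i \<noteq> (i + 1) mod length vs" "(i + 1) mod length vs < length vs"
      using that assms by (auto simp: mod_Suc)
    then show ?thesis using that assms by (simp add: nth_eq_iff_index_eq)
  qed
  then have "(\<Sum>i<length vs. sombor_edge E {vs ! i, vs ! ((i + 1) mod length vs)})
      = (\<Sum>i<length vs. sombor_term (degree E (vs ! i)) (degree E (vs ! ((i + 1) mod length vs))))"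
    by (intro sum.cong) (simp_all add: sombor_edge_doubleton)
  then show ?thesis
    unfolding cycle_edges_def sum.reindex[OF inj_on_cycle_edge[OF assms]] comp_def .
qed

context cactus_graph
begin

lemma bridge_sombor_le:
  assumes e: "e \<in> E" "e \<notin> \<Union>(cycles E)"
  shows "sombor_edge E e \<le> pendant_edge_weight (card V)"
    and "sombor_edge E e = pendant_edge_weight (card V) \<Longrightarrow> \<exists>w\<in>e. degree E w = card V - 1"
proof -
  obtain u v where uv: "u \<noteq> v" "e = {u, v}" using e(1) by (blast elim: edgeE)
  define a where "a = real (degree E u)"
  define b where "b = real (degree E v)"
  have ab: "1 \<le> a" "1 \<le> b" "a + b \<le> real (card V)"
    using one_le_degree[of u v] one_le_degree[of v u] bridge_degree_sum_le[of u v] e uv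
    by (auto simp: a_def b_def insert_commute simp flip: of_nat_add)
  have w: "sombor_edge E e = sombor_term a b" using uv by (simp add: sombor_edge_doubleton a_def b_def)
  have shift: "sombor_term a b \<le> sombor_term (a + b - 1) 1"
    using ab by (intro sombor_term_le_shift) simp
  have top: "sombor_term (a + b - 1) 1 \<le> pendant_edge_weight (card V)"
    unfolding pendant_edge_weight_def using ab by (intro sombor_term_mono) auto
  show "sombor_edge E e \<le> pendant_edge_weight (card V)" using w shift top by linarith
  assume eq: "sombor_edge E e = pendant_edge_weight (card V)"
  have "\<not> 0 < (a - 1) * (b - 1)"
    using sombor_term_less_shift[of a 1 b] w top eq by linarith
  then have "(a - 1) * (b - 1) = 0" using ab mult_nonneg_nonneg[of "a - 1" "b - 1"] by linarith
  then have "a = 1 \<or> b = 1" by simp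
  moreover have "a + b = real (card V)"
  proof (rule ccontr)
    assume "a + b \<noteq> real (card V)"
    then have "sombor_term (a + b - 1) 1 < pendant_edge_weight (card V)"
      unfolding pendant_edge_weight_def using ab by (intro sombor_term_strict_mono) auto
    then show False using w shift eq by linarith
  qed
  ultimately have "degree E u = card V - 1 \<or> degree E v = card V - 1"
    by (auto simp: a_def b_def)
  then show "\<exists>w\<in>e. degree E w = card V - 1" using uv(2) by auto
qed

lemma triangle_sombor_le:
  assumes C: "cycle_edges [a, b, c] \<in> cycles E" "distinct [a, b, c]"
  shows "(\<Sum>e\<in>cycle_edges [a, b, c]. sombor_edge E e) \<le> triangle_weight (card V)"
    and "(\<Sum>e\<in>cycle_edges [a, b, c]. sombor_edge E e) = triangle_weight (card V) \<Longrightarrow>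
           degree E a = card V - 1 \<or> degree E b = card V - 1 \<or> degree E c = card V - 1"
proof -
  have three: "{..<length [a, b, c]} = {0, 1, 2}" by auto
  have sum: "(\<Sum>e\<in>cycle_edges [a, b, c]. sombor_edge E e)
      = sombor_term (degree E a) (degree E b) + sombor_term (degree E b) (degree E c)
        + sombor_term (degree E c) (degree E a)"
    using sum_sombor_edge_cycle[OF C(2)] three by simp
  have ge2: "2 \<le> real (degree E a)" "2 \<le> real (degree E b)" "2 \<le> real (degree E c)"
    using two_le_degree_on_cycle[OF C] by simp_all
  have le: "real (degree E a) + real (degree E b) + real (degree E c) \<le> (real (card V) - 1) + 4"
    using sum_degree_cycle_le[OF C] C(2) by simp
  note tri = sombor_term_triangle_le[OF ge2 le]
  show "(\<Sum>e\<in>cycle_edges [a, b, c]. sombor_edge E e) \<le> triangle_weight (card V)"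
    using tri(1) sum by (simp add: triangle_weight_def)
  assume "(\<Sum>e\<in>cycle_edges [a, b, c]. sombor_edge E e) = triangle_weight (card V)"
  then have "degree E a + degree E b + degree E c = card V + 3 \<and>
      ((degree E b = 2 \<and> degree E c = 2) \<or> (degree E c = 2 \<and> degree E a = 2) \<or>
       (degree E a = 2 \<and> degree E b = 2))"
    using tri(2) sum by (simp add: triangle_weight_def)
  then show "degree E a = card V - 1 \<or> degree E b = card V - 1 \<or> degree E c = card V - 1"
    by auto
qed

lemma long_cycle_sombor_less:
  assumes n: "5 \<le> card V" and C: "C \<in> cycles E" and long: "4 \<le> card C"
  shows "(\<Sum>e\<in>C. sombor_edge E e)
           < (real (card C) - 3) * pendant_edge_weight (card V) + triangle_weight (card V)"
proof -
  obtain vs where vs: "3 \<le> length vs" "distinct vs" "C = cycle_edges vs"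
    using C by (blast elim: cyclesE)
  have Cvs: "cycle_edges vs \<in> cycles E" using C vs by simp
  have card_C: "card C = length vs" using card_cycle_edges[OF vs(2,1)] vs(3) by simp
  define d where "d i = real (degree E (vs ! i))" for i
  have "2 \<le> d i" if "i < length vs" for i
    using two_le_degree_on_cycle[OF Cvs vs(2,1)] that by (simp add: d_def)
  moreover have "(\<Sum>i<length vs. d i) \<le> real (card V) + real (length vs)"
    using sum_degree_cycle_le[OF Cvs vs(2,1)] sum_nth_eq_sum_set[OF vs(2), of "\<lambda>v. real (degree E v)"]
    by (simp add: d_def flip: of_nat_sum of_nat_add)
  ultimately have "(\<Sum>i<length vs. sombor_term (d i) (d ((i + 1) mod length vs)))
      < (real (length vs) - 3) * pendant_edge_weight (card V) + triangle_weight (card V)"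
    using sombor_term_cyclic_sum_less[of "length vs" "card V"] long n card_C by simp
  then show ?thesis using sum_sombor_edge_cycle[OF vs(2,1)] vs(3) card_C by (simp add: d_def)
qed

lemma cycle_sombor_le:
  assumes n: "5 \<le> card V" and C: "C \<in> cycles E"
  shows "(\<Sum>e\<in>C. sombor_edge E e)
           \<le> (real (card C) - 3) * pendant_edge_weight (card V) + triangle_weight (card V)"
    and "(\<Sum>e\<in>C. sombor_edge E e)
           = (real (card C) - 3) * pendant_edge_weight (card V) + triangle_weight (card V) \<Longrightarrow>
         \<exists>a b x. C = cycle_edges [a, b, x] \<and> degree E a = card V - 1"
proof -
  have triangle: "card C = 3" if "\<not> 4 \<le> card C"
    using three_le_card_cycle[OF C] that by linarith
  show "(\<Sum>e\<in>C. sombor_edge E e)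
           \<le> (real (card C) - 3) * pendant_edge_weight (card V) + triangle_weight (card V)"
  proof (cases "4 \<le> card C")
    case True
    then show ?thesis using long_cycle_sombor_less[OF n C] by fastforce
  next
    case False
    then obtain a b c where "distinct [a, b, c]" "C = cycle_edges [a, b, c]"
      using triangle C by (blast elim: triangle_cycleE)
    then show ?thesis using triangle_sombor_le(1)[of a b c] C triangle False by simp
  qed
  assume eq: "(\<Sum>e\<in>C. sombor_edge E e)
      = (real (card C) - 3) * pendant_edge_weight (card V) + triangle_weight (card V)"
  then have "\<not> 4 \<le> card C" using long_cycle_sombor_less[OF n C] by fastforce
  then obtain a b c where abc: "distinct [a, b, c]" "C = cycle_edges [a, b, c]"
    using triangle C by (blast elim: triangle_cycleE)
  then have "degree E a = card V - 1 \<or> degree E b = card V - 1 \<or> degree E c = card V - 1"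
    using triangle_sombor_le(2)[of a b c] C eq triangle \<open>\<not> 4 \<le> card C\<close> by simp
  then show "\<exists>a b x. C = cycle_edges [a, b, x] \<and> degree E a = card V - 1"
    using abc(2) cycle_edges_rotate3[of b c a] cycle_edges_rotate3[of a b c] by metis
qed

lemma sombor_deficit:
  fixes B K :: real
  shows "(real (card V) - 1 - 2 * real (card (cycles E))) * B + real (card (cycles E)) * K - sombor E
    = (real (card V) - 1 + real (card (cycles E)) - real (card E)) * B
      + (\<Sum>e\<in>E - \<Union>(cycles E). B - sombor_edge E e)
      + (\<Sum>C\<in>cycles E. (real (card C) - 3) * B + K - (\<Sum>e\<in>C. sombor_edge E e))"
proof -
  let ?N = "E - \<Union>(cycles E)"
  have "\<Union>(cycles E) \<subseteq> E" using cycle_subset_edges by blast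
  then have fin: "finite ?N" "finite (\<Union>(cycles E))" "\<And>C. C \<in> cycles E \<Longrightarrow> finite C"
    using finite_edges finite_subset[OF cycle_subset_edges finite_edges] by (auto intro: finite_subset)
  have E: "E = ?N \<union> \<Union>(cycles E)" "?N \<inter> \<Union>(cycles E) = {}"
    using cycle_subset_edges by auto
  have "sombor E = (\<Sum>e\<in>?N. sombor_edge E e) + (\<Sum>C\<in>cycles E. \<Sum>e\<in>C. sombor_edge E e)"
    unfolding sombor_eq_sum_sombor_edge sum.cong[OF E(1) refl] sum.union_disjoint[OF fin(1,2) E(2)]
    using sum.Union_disjoint[of "cycles E" "sombor_edge E"] fin cycles_disjoint by simp
  moreover have "real (card E) = real (card ?N) + (\<Sum>C\<in>cycles E. real (card C))"
    using card_Union_cycles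
    unfolding arg_cong[where f = card, OF E(1)] card_Un_disjoint[OF fin(1,2) E(2)] by (simp add: of_nat_sum)
  moreover have "(\<Sum>e\<in>?N. B - sombor_edge E e) = real (card ?N) * B - (\<Sum>e\<in>?N. sombor_edge E e)"
    by (simp add: sum_subtractf)
  moreover have "(\<Sum>C\<in>cycles E. (real (card C) - 3) * B + K - (\<Sum>e\<in>C. sombor_edge E e))
      = (\<Sum>C\<in>cycles E. real (card C)) * B - real (card (cycles E)) * (3 * B - K)
        - (\<Sum>C\<in>cycles E. \<Sum>e\<in>C. sombor_edge E e)"
  proof -
    have "(real (card C) - 3) * B + K - (\<Sum>e\<in>C. sombor_edge E e)
        = real (card C) * B - (3 * B - K) - (\<Sum>e\<in>C. sombor_edge E e)" for C :: "'a set set"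
      by (simp add: algebra_simps)
    then show ?thesis by (simp only: sum_subtractf sum_distrib_right sum_constant) (simp add: algebra_simps)
  qed
  ultimately show ?thesis by (simp add: algebra_simps)
qed

lemma sombor_le:
  assumes n: "5 \<le> card V"
  defines "R \<equiv> (real (card V) - 1 - 2 * real (card (cycles E))) * pendant_edge_weight (card V)
                + real (card (cycles E)) * triangle_weight (card V)"
  shows "sombor E \<le> R"
    and "sombor E = R \<Longrightarrow>
           (\<forall>e\<in>E - \<Union>(cycles E). \<exists>u\<in>e. degree E u = card V - 1) \<and>
           (\<forall>C\<in>cycles E. \<exists>a b x. C = cycle_edges [a, b, x] \<and> degree E a = card V - 1)"
proof -
  define B where "B = pendant_edge_weight (card V)"
  define K where "K = triangle_weight (card V)"
  define slack_bridge where "slack_bridge e = B - sombor_edge E e" for e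
  define slack_cycle where "slack_cycle C = (real (card C) - 3) * B + K - (\<Sum>e\<in>C. sombor_edge E e)" for C
  have bridges: "0 \<le> slack_bridge e" if "e \<in> E - \<Union>(cycles E)" for e
    using bridge_sombor_le(1)[of e] that by (simp add: slack_bridge_def B_def)
  have cycles: "0 \<le> slack_cycle C" if "C \<in> cycles E" for C
    using cycle_sombor_le(1)[OF n that] by (simp add: slack_cycle_def B_def K_def)
  have "0 \<le> B"
    using sombor_term_ge[of "real (card V) - 1" 1] n by (simp add: B_def pendant_edge_weight_def)
  then have nonneg: "0 \<le> (real (card V) - 1 + real (card (cycles E)) - real (card E)) * B"
    "0 \<le> (\<Sum>e\<in>E - \<Union>(cycles E). slack_bridge e)" "0 \<le> (\<Sum>C\<in>cycles E. slack_cycle C)"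
    using card_edges_le bridges cycles by (simp, intro sum_nonneg, blast, intro sum_nonneg, blast)
  have deficit: "R - sombor E = (real (card V) - 1 + real (card (cycles E)) - real (card E)) * B
      + (\<Sum>e\<in>E - \<Union>(cycles E). slack_bridge e) + (\<Sum>C\<in>cycles E. slack_cycle C)"
    unfolding R_def B_def[symmetric] K_def[symmetric] slack_bridge_def slack_cycle_def
    by (rule sombor_deficit)
  show "sombor E \<le> R" using deficit nonneg by linarith
  assume "sombor E = R"
  then have "(\<Sum>e\<in>E - \<Union>(cycles E). slack_bridge e) = 0" "(\<Sum>C\<in>cycles E. slack_cycle C) = 0"
    using deficit nonneg by linarith+
  then have "slack_bridge e = 0" if "e \<in> E - \<Union>(cycles E)" for e
    using that bridges finite_edges sum_nonneg_eq_0_iff[of "E - \<Union>(cycles E)" slack_bridge] by blast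
  moreover have "slack_cycle C = 0" if "C \<in> cycles E" for C
    using \<open>(\<Sum>C\<in>cycles E. slack_cycle C) = 0\<close> that cycles finite_cycles sum_nonneg_eq_0_iff by blast
  ultimately show "(\<forall>e\<in>E - \<Union>(cycles E). \<exists>u\<in>e. degree E u = card V - 1) \<and>
      (\<forall>C\<in>cycles E. \<exists>a b x. C = cycle_edges [a, b, x] \<and> degree E a = card V - 1)"
    using bridge_sombor_le(2) cycle_sombor_le(2)[OF n]
    by (auto simp: slack_bridge_def slack_cycle_def B_def K_def)
qed

end

section \<open>Stars with a matching\<close>

definition star_with_matching :: "'a set \<Rightarrow> 'a set set \<Rightarrow> 'a \<Rightarrow> 'a set set \<Rightarrow> bool" where
  "star_with_matching V E c M \<longleftrightarrow> finite V \<and> c \<in> V \<and> (\<forall>m\<in>M. m \<subseteq> V - {c} \<and> card m = 2) \<and>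
     pairwise disjnt M \<and> E = (\<lambda>v. {c, v}) ` (V - {c}) \<union> M"

lemma star_with_matching_card_Union:
  assumes "star_with_matching V E c M"
  shows "finite M" "\<Union>M \<subseteq> V - {c}" "card (\<Union>M) = 2 * card M"
proof -
  show M: "finite M" "\<Union>M \<subseteq> V - {c}"
    using assms finite_subset[of M "Pow V"] by (auto simp: star_with_matching_def)
  have "card (\<Union>M) = (\<Sum>m\<in>M. card m)"
    using assms M by (intro card_Union_disjoint) (auto simp: star_with_matching_def intro: finite_subset)
  also have "\<dots> = 2 * card M" using assms by (simp add: star_with_matching_def)
  finally show "card (\<Union>M) = 2 * card M" .
qed

lemma graph_iso_if_image:
  assumes bij: "bij_betw f W V" and F: "\<forall>e\<in>F. e \<subseteq> W" and image: "(`) f ` F = E"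
  shows "graph_iso V E W F"
  unfolding graph_iso_def
proof (intro exI conjI ballI)
  let ?g = "inv_into W f"
  show "bij_betw ?g V W" using bij by (rule bij_betw_inv_into)
  fix u v assume "u \<in> V" "v \<in> V"
  then have uv: "?g u \<in> W" "?g v \<in> W" "f (?g u) = u" "f (?g v) = v"
    using bij by (auto simp: bij_betw_def inv_into_into f_inv_into_f)
  have "{u, v} = f ` {?g u, ?g v}" using uv by simp
  moreover have "f ` {?g u, ?g v} \<in> (`) f ` F \<longleftrightarrow> {?g u, ?g v} \<in> F"
    by (rule inj_on_image_mem_iff[OF inj_on_image_Pow]) (use bij F uv in \<open>auto simp: bij_betw_def\<close>)
  ultimately show "{u, v} \<in> E \<longleftrightarrow> {?g u, ?g v} \<in> F" using image by simp
qed

lemma Union_consecutive_pairs: "(\<Union>j\<in>{1..t}. {2 * j - 1, 2 * j}) = {1..2 * t :: nat}"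
proof (intro equalityI subsetI)
  fix i :: nat assume "i \<in> {1..2 * t}"
  then have "(i + 1) div 2 \<in> {1..t}" "i \<in> {2 * ((i + 1) div 2) - 1, 2 * ((i + 1) div 2)}" by auto
  then show "i \<in> (\<Union>j\<in>{1..t}. {2 * j - 1, 2 * j})" by blast
qed auto

lemma enumerate_two_element_sets:
  assumes "finite M" "\<And>m. m \<in> M \<Longrightarrow> card m = 2"
  obtains \<psi> :: "nat \<Rightarrow> 'a" where "(\<lambda>j. \<psi> ` {2 * j - 1, 2 * j}) ` {1..card M} = M"
proof -
  obtain g where g: "g ` {1..card M} = M"
    using ex_bij_betw_nat_finite_1[OF assms(1)] by (auto simp: bij_betw_def)
  have "\<forall>j\<in>{1..card M}. \<exists>q. fst q \<noteq> snd q \<and> g j = {fst q, snd q}"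
  proof
    fix j assume "j \<in> {1..card M}"
    then have "card (g j) = 2" using g assms(2) by blast
    then obtain x y where "x \<noteq> y" "g j = {x, y}" by (auto simp: card_2_iff)
    then show "\<exists>q. fst q \<noteq> snd q \<and> g j = {fst q, snd q}" by (intro exI[of _ "(x, y)"]) simp
  qed
  from bchoice[OF this] obtain p
    where p: "\<forall>j\<in>{1..card M}. g j = {fst (p j), snd (p j)}" by blast
  define \<psi> where "\<psi> i = (if odd i then fst (p ((i + 1) div 2)) else snd (p (i div 2)))" for i
  have "\<psi> ` {2 * j - 1, 2 * j} = g j" if "j \<in> {1..card M}" for j
  proof -
    have "2 * j - 1 + 1 = 2 * j" "odd (2 * j - 1)" using that by auto
    then show ?thesis using p that by (simp add: \<psi>_def insert_commute)
  qed
  then have "(\<lambda>j. \<psi> ` {2 * j - 1, 2 * j}) ` {1..card M} = M" using g by auto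
  then show thesis by (rule that)
qed

lemma star_with_matching_numbering:
  assumes S: "star_with_matching V E c M"
  obtains \<phi> where "bij_betw \<phi> {0..<card V} V" "\<phi> 0 = c"
    "(\<lambda>j. \<phi> ` {2 * j - 1, 2 * j}) ` {1..card M} = M"
proof -
  define n where "n = card V"
  define t where "t = card M"
  define L where "L = V - {c} - \<Union>M"
  have fin: "finite V" "finite M" and c: "c \<in> V" and M: "\<And>m. m \<in> M \<Longrightarrow> card m = 2"
    using S star_with_matching_card_Union(1)[OF S] by (auto simp: star_with_matching_def)
  have UM: "\<Union>M \<subseteq> V - {c}" "card (\<Union>M) = 2 * t"
    using star_with_matching_card_Union[OF S] by (simp_all add: t_def)
  have "card (V - {c}) = n - 1" "0 < n" using fin c by (auto simp: n_def card_gt_0_iff)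
  then have card_L: "card L = n - (2 * t + 1)" and "2 * t + 1 \<le> n"
    using UM fin c card_mono[OF _ UM(1)] by (auto simp: L_def card_Diff_subset finite_subset)
  obtain \<psi> where \<psi>: "(\<lambda>j. \<psi> ` {2 * j - 1, 2 * j}) ` {1..t} = M"
    using enumerate_two_element_sets[OF fin(2) M] by (auto simp: t_def)
  have "finite L" "card {2 * t + 1..<n} = card L" using fin card_L by (simp_all add: L_def)
  then obtain h where "bij_betw h {2 * t + 1..<n} L"
    using finite_same_card_bij[OF finite_atLeastLessThan] by blast
  then have h: "h ` {2 * t + 1..<n} = L" by (rule bij_betw_imp_surj_on)
  define \<phi> where "\<phi> i = (if i = 0 then c else if i \<le> 2 * t then \<psi> i else h i)" for i
  have pair: "\<phi> ` {2 * j - 1, 2 * j} = \<psi> ` {2 * j - 1, 2 * j}" if "j \<in> {1..t}" for j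
    using that by (auto simp: \<phi>_def)
  then have matching: "(\<lambda>j. \<phi> ` {2 * j - 1, 2 * j}) ` {1..t} = M"
    using image_cong[OF refl pair] \<psi> by simp
  have "\<phi> ` {1..2 * t} = \<Union>M"
    unfolding Union_consecutive_pairs[symmetric] image_UN using pair \<psi> by simp
  moreover have "\<phi> ` {2 * t + 1..<n} = L" using h by (auto simp: \<phi>_def)
  moreover have "{0..<n} = {0} \<union> {1..2 * t} \<union> {2 * t + 1..<n}" using \<open>2 * t + 1 \<le> n\<close> by auto
  moreover have "\<phi> 0 = c" by (simp add: \<phi>_def)
  ultimately have "\<phi> ` {0..<n} = {c} \<union> \<Union>M \<union> L" by (simp add: image_Un)
  also have "\<dots> = V" using UM(1) c by (auto simp: L_def)
  finally have "bij_betw \<phi> {0..<n} V"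
    using eq_card_imp_inj_on[of "{0..<n}" \<phi>] by (simp add: bij_betw_def n_def)
  then show thesis using that matching \<open>\<phi> 0 = c\<close> by (simp add: n_def t_def)
qed

lemma graph_iso_star_with_matching:
  assumes S: "star_with_matching V E c M"
  shows "graph_iso V E (H_vertices (card V)) (H_edges (card V) (card M))"
proof -
  define n where "n = card V"
  define t where "t = card M"
  obtain \<phi> where bij: "bij_betw \<phi> {0..<n} V" and phi0: "\<phi> 0 = c"
    and pairs: "(\<lambda>j. \<phi> ` {2 * j - 1, 2 * j}) ` {1..t} = M"
    using star_with_matching_numbering[OF S] by (auto simp: n_def t_def)
  have "card (\<Union>M) = 2 * t" "\<Union>M \<subseteq> V - {c}" "finite V" "c \<in> V"
    using star_with_matching_card_Union[OF S] S by (auto simp: t_def star_with_matching_def)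
  moreover from this have "0 < n" by (auto simp: n_def card_gt_0_iff)
  ultimately have "2 * t < n"
    using card_mono[of "V - {c}" "\<Union>M"] by (simp add: n_def)
  have "\<phi> ` ({0..<n} - {0}) = \<phi> ` {0..<n} - \<phi> ` {0}"
    using bij \<open>0 < n\<close> by (intro inj_on_image_set_diff) (auto simp: bij_betw_def)
  moreover have "{0..<n} - {0} = {1..<n}" by auto
  ultimately have "\<phi> ` {1..<n} = V - {c}" using bij phi0 by (simp add: bij_betw_def)
  moreover have "{{0, i} | i. 1 \<le> i \<and> i < n} = (\<lambda>i. {0, i}) ` {1..<n}" by auto
  then have "(`) \<phi> ` {{0, i} | i. 1 \<le> i \<and> i < n} = (\<lambda>v. {c, v}) ` (\<phi> ` {1..<n})"
    using phi0 by (simp add: image_image)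
  ultimately have "(`) \<phi> ` {{0, i} | i. 1 \<le> i \<and> i < n} = (\<lambda>v. {c, v}) ` (V - {c})"
    by simp
  moreover have "{{2 * j - 1, 2 * j} | j. 1 \<le> j \<and> j \<le> t} = (\<lambda>j. {2 * j - 1, 2 * j}) ` {1..t}"
    by auto
  then have "(`) \<phi> ` {{2 * j - 1, 2 * j} | j. 1 \<le> j \<and> j \<le> t} = M"
    using pairs by (simp only: image_image)
  ultimately have "(`) \<phi> ` H_edges n t = E"
    using S by (simp add: H_edges_def image_Un star_with_matching_def)
  moreover have "\<forall>e\<in>H_edges n t. e \<subseteq> {0..<n}"
    using \<open>2 * t < n\<close> by (auto simp: H_edges_def)
  ultimately show ?thesis
    using graph_iso_if_image[OF bij] by (simp add: H_vertices_def n_def t_def)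
qed

context
  fixes V :: "'a set" and E :: "'a set set" and c :: 'a and M :: "'a set set"
  assumes S: "star_with_matching V E c M"
begin

private lemma parts:
  "finite V" "c \<in> V" "\<And>m. m \<in> M \<Longrightarrow> m \<subseteq> V - {c} \<and> card m = 2" "pairwise disjnt M"
  "E = (\<lambda>v. {c, v}) ` (V - {c}) \<union> M"
  using S by (auto simp: star_with_matching_def)

lemma center_notin_matching: "m \<in> M \<Longrightarrow> c \<notin> m"
  using parts(3) by blast

lemma star_with_matching_simple: "simple_graph V E"
  using parts by (auto simp: simple_graph_def card_2_iff)

lemma neighbours_star_with_matching:
  "neighbours E c = V - {c}"
  "v \<in> V - {c} \<Longrightarrow> neighbours E v = insert c {w. {v, w} \<in> M}"
  using parts(3) by (auto simp: parts(5) doubleton_eq_iff dest: center_notin_matching)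

lemma partner_in_matching:
  assumes m: "m \<in> M" and v: "v \<in> m"
  shows "{w. {v, w} \<in> M} = m - {v}"
proof (intro equalityI subsetI)
  fix w assume "w \<in> {w. {v, w} \<in> M}"
  then have vw: "{v, w} \<in> M" by simp
  have "{v, w} = m"
  proof (rule ccontr)
    assume "{v, w} \<noteq> m"
    then have "disjnt {v, w} m" by (rule pairwiseD[OF parts(4) vw m])
    then show False using v by (simp add: disjnt_def)
  qed
  moreover have "w \<noteq> v"
  proof
    assume "w = v"
    then have "card {v, w} = 1" by simp
    then show False using parts(3)[OF vw] by simp
  qed
  ultimately show "w \<in> m - {v}" by blast
next
  fix w assume "w \<in> m - {v}"
  moreover obtain x y where "x \<noteq> y" "m = {x, y}" using parts(3)[OF m] by (auto simp: card_2_iff)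
  ultimately have "m = {v, w}" using v by auto
  then show "w \<in> {w. {v, w} \<in> M}" using m by simp
qed

lemma degree_star_with_matching:
  assumes "v \<in> V"
  shows "degree E v = (if v = c then card V - 1 else if v \<in> \<Union>M then 2 else 1)"
proof -
  interpret finite_simple_graph V E by unfold_locales (rule star_with_matching_simple)
  consider "v = c" | m where "v \<noteq> c" "m \<in> M" "v \<in> m" | "v \<noteq> c" "v \<notin> \<Union>M" by blast
  then show ?thesis
  proof cases
    case 1
    then show ?thesis using parts(1,2) by (simp add: degree_eq_card_neighbours neighbours_star_with_matching)
  next
    case 2
    then have "neighbours E v = insert c (m - {v})"
      using assms neighbours_star_with_matching(2) partner_in_matching by simp
    moreover have "finite m" "c \<notin> m" "card m = 2" using parts(3)[OF 2(2)] 2 finite_subset parts(1)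
      by auto
    ultimately have "degree E v = 2" using 2 by (simp add: degree_eq_card_neighbours)
    moreover have "v \<in> \<Union>M" using 2 by blast
    ultimately show ?thesis using 2 by simp
  next
    case 3
    then have "{w. {v, w} \<in> M} = {}" by auto
    then show ?thesis using 3 assms neighbours_star_with_matching(2)
      by (simp add: degree_eq_card_neighbours)
  qed
qed

lemma sombor_edge_star:
  assumes "v \<in> V - {c}"
  shows "sombor_edge E {c, v} = sombor_term (real (card V) - 1) (if v \<in> \<Union>M then 2 else 1)"
proof -
  have "v \<in> V" "c \<noteq> v" using assms by auto
  then have "sombor_edge E {c, v} = sombor_term (real (degree E c)) (real (degree E v))"
    by (simp add: sombor_edge_doubleton)
  moreover have "1 \<le> card V" using parts(1,2) by (auto simp: Suc_le_eq card_gt_0_iff)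
  then have "real (degree E c) = real (card V) - 1"
    using parts(2) degree_star_with_matching[of c] by (simp add: of_nat_diff)
  ultimately show ?thesis
    using degree_star_with_matching[OF \<open>v \<in> V\<close>] \<open>c \<noteq> v\<close> by auto
qed

lemma sombor_edge_matching:
  assumes "m \<in> M"
  shows "sombor_edge E m = sombor_term 2 2"
proof -
  obtain x y where "x \<noteq> y" "m = {x, y}" using parts(3)[OF assms] by (auto simp: card_2_iff)
  then show ?thesis
    using assms parts(3)[OF assms] by (auto simp: sombor_edge_doubleton degree_star_with_matching)
qed

lemma sombor_star_with_matching:
  "sombor E = real (card V - 1 - 2 * card M) * pendant_edge_weight (card V)
                + real (card M) * triangle_weight (card V)"
proof -
  define L where "L = V - {c} - \<Union>M"
  have UM: "finite M" "\<Union>M \<subseteq> V - {c}" "card (\<Union>M) = 2 * card M"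
    using star_with_matching_card_Union[OF S] by auto
  have fin: "finite (\<Union>M)" "finite L" using finite_subset[OF UM(2)] parts(1) by (auto simp: L_def)
  have disj: "(\<lambda>v. {c, v}) ` (V - {c}) \<inter> M = {}" using parts(3) by auto
  have inj: "inj_on (\<lambda>v. {c, v}) (V - {c})" by (auto simp: inj_on_def doubleton_eq_iff)
  have "sombor E = (\<Sum>v\<in>V - {c}. sombor_edge E {c, v}) + (\<Sum>m\<in>M. sombor_edge E m)"
    unfolding sombor_eq_sum_sombor_edge parts(5)
    using sum.union_disjoint[OF finite_imageI[OF finite_Diff[OF parts(1)]] UM(1) disj]
    by (simp add: sum.reindex[OF inj])
  also have "(\<Sum>v\<in>V - {c}. sombor_edge E {c, v})
      = (\<Sum>v\<in>\<Union>M. sombor_edge E {c, v}) + (\<Sum>v\<in>L. sombor_edge E {c, v})"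
  proof -
    have "V - {c} = \<Union>M \<union> L" "\<Union>M \<inter> L = {}" using UM(2) by (auto simp: L_def)
    then show ?thesis using fin by (simp add: sum.union_disjoint)
  qed
  also have "\<dots> = real (card (\<Union>M)) * sombor_term (real (card V) - 1) 2
      + real (card L) * sombor_term (real (card V) - 1) 1"
  proof -
    have "sombor_edge E {c, v} = sombor_term (real (card V) - 1) 2" if "v \<in> \<Union>M" for v
      using sombor_edge_star[of v] that UM(2) by auto
    moreover have "sombor_edge E {c, v} = sombor_term (real (card V) - 1) 1" if "v \<in> L" for v
      using sombor_edge_star[of v] that by (auto simp: L_def)
    ultimately show ?thesis by simp
  qed
  also have "(\<Sum>m\<in>M. sombor_edge E m) = real (card M) * sombor_term 2 2"
    using sombor_edge_matching by simp
  also have "card L = card V - 1 - 2 * card M"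
    using UM parts(1,2) by (simp add: L_def card_Diff_subset finite_subset)
  finally show ?thesis
    using UM(3) by (simp add: pendant_edge_weight_def triangle_weight_def algebra_simps)
qed

end

lemma star_with_matching_H:
  assumes "2 * t < n"
  shows "star_with_matching (H_vertices n) (H_edges n t) 0 ((\<lambda>j. {2 * j - 1, 2 * j}) ` {1..t})"
    and "card ((\<lambda>j. {2 * j - 1, 2 * j}) ` {1..t}) = t"
proof -
  have index: "j = (x + 1) div 2" if "x \<in> {2 * j - 1, 2 * j}" "1 \<le> j" for x j :: nat
    using that by auto
  have inj: "inj_on (\<lambda>j. {2 * j - 1, 2 * j}) {1..t}"
    using index by (intro inj_onI) (metis atLeastAtMost_iff insertI1)
  then show "card ((\<lambda>j. {2 * j - 1, 2 * j}) ` {1..t}) = t" by (simp add: card_image)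
  have "pairwise disjnt ((\<lambda>j. {2 * j - 1, 2 * j}) ` {1..t})"
  proof (rule pairwiseI)
    fix A B assume "A \<in> (\<lambda>j. {2 * j - 1, 2 * j}) ` {1..t}" "B \<in> (\<lambda>j. {2 * j - 1, 2 * j}) ` {1..t}" "A \<noteq> B"
    then obtain i j where "i \<in> {1..t}" "j \<in> {1..t}" "A = {2 * i - 1, 2 * i}" "B = {2 * j - 1, 2 * j}"
      by blast
    then have ij: "1 \<le> i" "1 \<le> j" "A = {2 * i - 1, 2 * i}" "B = {2 * j - 1, 2 * j}" by auto
    with \<open>A \<noteq> B\<close> have "i \<noteq> j" by blast
    show "disjnt A B"
      unfolding disjnt_def using index[of _ i] index[of _ j] ij \<open>i \<noteq> j\<close> by blast
  qed
  moreover have "H_edges n t = (\<lambda>v. {0, v}) ` ({0..<n} - {0}) \<union> (\<lambda>j. {2 * j - 1, 2 * j}) ` {1..t}"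
    by (auto simp: H_edges_def)
  moreover have "{2 * j - 1, 2 * j} \<subseteq> {0..<n} - {0}" "card {2 * j - 1, 2 * j} = 2" if "j \<in> {1..t}" for j
    using that assms by auto
  ultimately show "star_with_matching (H_vertices n) (H_edges n t) 0 ((\<lambda>j. {2 * j - 1, 2 * j}) ` {1..t})"
    using assms by (auto simp: star_with_matching_def H_vertices_def)
qed

lemma sombor_image:
  assumes "simple_graph V E" and inj: "inj_on f V"
  shows "sombor ((`) f ` E) = sombor E"
proof -
  interpret finite_simple_graph V E by unfold_locales fact
  have "E \<subseteq> Pow V" using edge_subset_card by blast
  then have inj_E: "inj_on ((`) f) E"
    using inj_on_subset[OF inj_on_image_Pow[OF inj]] by blast
  have degree: "degree ((`) f ` E) (f u) = degree E u" if "u \<in> V" for u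
  proof -
    have "{e' \<in> (`) f ` E. f u \<in> e'} = (`) f ` {e \<in> E. u \<in> e}"
    proof (intro equalityI subsetI)
      fix e' assume "e' \<in> {e' \<in> (`) f ` E. f u \<in> e'}"
      then obtain e where "e \<in> E" "e' = f ` e" "f u \<in> f ` e" by blast
      moreover from this have "u \<in> e"
        using inj_on_image_mem_iff[OF inj that] edge_subset_card by blast
      ultimately show "e' \<in> (`) f ` {e \<in> E. u \<in> e}" by blast
    qed auto
    then show ?thesis
      unfolding degree_def by (simp add: card_image inj_on_subset[OF inj_E])
  qed
  have "sombor_edge ((`) f ` E) (f ` e) = sombor_edge E e" if "e \<in> E" for e
  proof -
    have e: "e \<subseteq> V" using edge_subset_card[OF that] by blast
    have "(\<Sum>w\<in>f ` e. (real (degree ((`) f ` E) w))\<^sup>2) = (\<Sum>u\<in>e. (real (degree ((`) f ` E) (f u)))\<^sup>2)"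
      by (simp add: sum.reindex[OF inj_on_subset[OF inj e]])
    also have "\<dots> = (\<Sum>u\<in>e. (real (degree E u))\<^sup>2)"
      using degree e by (intro sum.cong) auto
    finally have "(\<Sum>w\<in>f ` e. (real (degree ((`) f ` E) w))\<^sup>2) = (\<Sum>u\<in>e. (real (degree E u))\<^sup>2)" .
    then show ?thesis by (simp add: sombor_edge_def)
  qed
  then show ?thesis
    by (simp add: sombor_eq_sum_sombor_edge sum.reindex[OF inj_E])
qed

lemma sombor_graph_iso:
  assumes G: "simple_graph V E" and H: "simple_graph W F" and iso: "graph_iso V E W F"
  shows "sombor E = sombor F"
proof -
  interpret G: finite_simple_graph V E by unfold_locales fact
  interpret H: finite_simple_graph W F by unfold_locales fact
  obtain f where bij: "bij_betw f V W"
    and adj: "\<And>u v. u \<in> V \<Longrightarrow> v \<in> V \<Longrightarrow> {u, v} \<in> E \<longleftrightarrow> {f u, f v} \<in> F"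
    using iso unfolding graph_iso_def by blast
  have "(`) f ` E = F"
  proof (intro equalityI subsetI)
    fix e' assume "e' \<in> (`) f ` E"
    then obtain e where e: "e \<in> E" "e' = f ` e" by blast
    then obtain u v where "e = {u, v}" "u \<in> V" "v \<in> V" by (blast elim: G.edgeE)
    then show "e' \<in> F" using adj e by simp
  next
    fix e' assume "e' \<in> F"
    then obtain x y where xy: "e' = {x, y}" "x \<in> W" "y \<in> W" by (auto elim!: H.edgeE)
    then obtain u v where "u \<in> V" "v \<in> V" "x = f u" "y = f v"
      using bij by (auto simp: bij_betw_def)
    moreover from this have "{u, v} \<in> E" using adj \<open>e' \<in> F\<close> xy by simp
    ultimately show "e' \<in> (`) f ` E" using xy by (intro image_eqI[of _ _ "{u, v}"]) auto
  qed
  then show ?thesis using sombor_image[OF G, of f] bij by (simp add: bij_betw_def)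
qed

section \<open>Cacti attaining the bound\<close>

locale extremal_cactus = cactus_graph +
  assumes five_le_card: "5 \<le> card V"
    and bridge_at_full_degree: "\<And>e. e \<in> E - \<Union>(cycles E) \<Longrightarrow> \<exists>u\<in>e. degree E u = card V - 1"
    and triangle_at_full_degree:
      "\<And>C. C \<in> cycles E \<Longrightarrow> \<exists>a b x. C = cycle_edges [a, b, x] \<and> degree E a = card V - 1"
begin

lemma ex_full_degree: "\<exists>c\<in>V. degree E c = card V - 1"
proof -
  obtain e where e: "e \<in> E" using edges_ne five_le_card by fastforce
  show ?thesis
  proof (cases "e \<in> \<Union>(cycles E)")
    case True
    then obtain C where "C \<in> cycles E" by blast
    then obtain a b x where "C = cycle_edges [a, b, x]" "degree E a = card V - 1" "C \<subseteq> E"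
      using triangle_at_full_degree cycle_subset_edges by blast
    then show ?thesis using edge_vertices[of a b] by (auto simp: cycle_edges_triangle)
  next
    case False
    then show ?thesis using bridge_at_full_degree[of e] e edge_subset_card by blast
  qed
qed

definition center :: 'a where
  "center = (SOME c. c \<in> V \<and> degree E c = card V - 1)"

lemma center: "center \<in> V" "degree E center = card V - 1"
  using someI_ex[OF ex_full_degree[unfolded Bex_def]] by (auto simp: center_def)

lemma eq_center_if_full_degree: "v \<in> V \<Longrightarrow> degree E v = card V - 1 \<Longrightarrow> v = center"
  using full_degree_unique center five_le_card by simp

lemma center_edge: "v \<in> V \<Longrightarrow> v \<noteq> center \<Longrightarrow> {center, v} \<in> E"
  using edge_if_full_degree center by blast

definition matching :: "'a set set" where
  "matching = {e \<in> E. center \<notin> e}"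

lemma matching_edge: "m \<in> matching \<Longrightarrow> m \<in> E \<and> center \<notin> m"
  by (simp add: matching_def)

lemma triangle_of_matching_edge:
  assumes "{b, x} \<in> matching"
  shows "cycle_edges [center, b, x] \<in> cycles E"
proof -
  have bx: "{b, x} \<in> E" "b \<noteq> x" "b \<in> V - {center}" "x \<in> V - {center}"
    using assms edge_vertices[of b x] by (auto simp: matching_def)
  then have "{center, b} \<in> E" "{x, center} \<in> E"
    using center_edge[of b] center_edge[of x] by (auto simp: insert_commute)
  then show ?thesis
    using bx by (intro cycle_edges_in_cycles) (auto simp: cycle_edges_triangle)
qed

lemma edges_eq_star_union_matching: "E = (\<lambda>v. {center, v}) ` (V - {center}) \<union> matching"
proof (intro equalityI subsetI)
  fix e assume "e \<in> E"
  then obtain x y where "e = {x, y}" "x \<noteq> y" "x \<in> V" "y \<in> V" by (rule edgeE)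
  then show "e \<in> (\<lambda>v. {center, v}) ` (V - {center}) \<union> matching"
    using \<open>e \<in> E\<close> by (auto simp: matching_def insert_commute)
qed (use center_edge in \<open>auto simp: matching_def\<close>)

lemma matching_disjoint: "pairwise disjnt matching"
proof (rule pairwiseI, rule ccontr)
  fix m1 m2 assume m: "m1 \<in> matching" "m2 \<in> matching" "m1 \<noteq> m2" "\<not> disjnt m1 m2"
  then obtain v where "v \<in> m1" "v \<in> m2" by (auto simp: disjnt_def)
  then obtain w1 w2 where w: "m1 = {v, w1}" "m2 = {v, w2}"
    using m(1,2) matching_edge by (metis edgeE insert_commute insertE singletonD)
  then have "v \<noteq> center" using m(1) matching_edge by blast
  have "cycle_edges [center, v, w1] = cycle_edges [center, v, w2]"
    using triangle_of_matching_edge m(1,2) w \<open>v \<noteq> center\<close>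
    by (intro cycle_eq_if_two_common) (auto simp: Union_cycle_edges)
  moreover have "m1 \<in> cycle_edges [center, v, w1]" using w by (simp add: cycle_edges_triangle)
  ultimately have "m1 \<in> cycle_edges [center, v, w2]" by simp
  then show False
    using m w matching_edge by (auto simp: cycle_edges_triangle)
qed

lemma star_with_matching: "star_with_matching V E center matching"
  unfolding star_with_matching_def
  using finite_vertices center matching_disjoint edges_eq_star_union_matching
  by (auto simp: matching_def dest: edge_subset_card)

lemma card_matching: "card matching = card (cycles E)"
proof -
  define triangle where "triangle m = insert m ((\<lambda>v. {center, v}) ` m)" for m
  have triangle_eq: "triangle {b, x} = cycle_edges [center, b, x]" for b x
    by (auto simp: triangle_def cycle_edges_triangle insert_commute)
  have "inj_on triangle matching"
  proof (rule inj_onI)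
    fix m1 m2 assume m: "m1 \<in> matching" "m2 \<in> matching" "triangle m1 = triangle m2"
    then have "m1 \<in> insert m2 ((\<lambda>v. {center, v}) ` m2)" by (auto simp: triangle_def)
    then show "m1 = m2" using matching_edge[OF m(1)] by auto
  qed
  moreover have "triangle ` matching = cycles E"
  proof (intro equalityI subsetI)
    fix C assume "C \<in> triangle ` matching"
    then obtain m where "m \<in> matching" "C = triangle m" by blast
    moreover from this obtain b x where "m = {b, x}"
      using matching_edge by (blast elim: edgeE)
    ultimately show "C \<in> cycles E" using triangle_eq triangle_of_matching_edge by simp
  next
    fix C assume C: "C \<in> cycles E"
    then obtain a b x where abx: "C = cycle_edges [a, b, x]" "degree E a = card V - 1"
      using triangle_at_full_degree by blast
    then have edges: "{a, b} \<in> E" "{b, x} \<in> E" "{x, a} \<in> E"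
      using cycle_subset_edges[OF C] by (auto simp: cycle_edges_triangle)
    then have "a = center" using abx(2) edge_vertices eq_center_if_full_degree by blast
    then have "{b, x} \<in> matching" using edges by (auto simp: matching_def)
    then show "C \<in> triangle ` matching" using abx \<open>a = center\<close> triangle_eq by auto
  qed
  ultimately have "bij_betw triangle matching (cycles E)" by (simp add: bij_betw_def)
  then show ?thesis by (rule bij_betw_same_card)
qed

end

theorem theorem3p1:
  fixes V :: "'a set" and E :: "'a set set" and n t :: nat
  assumes "n \<ge> 5"
    and "cactus V E"
    and "card V = n"
    and "card (cycles E) = t"
  shows "sombor E \<le> real (n - 2*t - 1) * sqrt ((real n - 1)\<^sup>2 + 1)
              + 2 * real t * sqrt ((real n - 1)\<^sup>2 + 4) + 2 * sqrt 2 * real t \<and>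
         (sombor E = real (n - 2*t - 1) * sqrt ((real n - 1)\<^sup>2 + 1)
              + 2 * real t * sqrt ((real n - 1)\<^sup>2 + 4) + 2 * sqrt 2 * real t
         \<longleftrightarrow> graph_iso V E (H_vertices n) (H_edges n t))"
proof -
  interpret cactus_graph V E by unfold_locales (fact assms(2))
  have n: "5 \<le> card V" and t: "2 * t < n"
    using assms two_mul_card_cycles_less by auto
  have bound: "real (n - 2 * t - 1) * sqrt ((real n - 1)\<^sup>2 + 1)
      + 2 * real t * sqrt ((real n - 1)\<^sup>2 + 4) + 2 * sqrt 2 * real t
      = (real n - 1 - 2 * real t) * pendant_edge_weight n + real t * triangle_weight n"
    unfolding pendant_edge_weight_def triangle_weight_def sombor_term_2_2
    using t by (simp add: of_nat_diff sombor_term_def algebra_simps)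
  have "sombor E = (real n - 1 - 2 * real t) * pendant_edge_weight n + real t * triangle_weight n
      \<longleftrightarrow> graph_iso V E (H_vertices n) (H_edges n t)"
  proof
    assume "sombor E = (real n - 1 - 2 * real t) * pendant_edge_weight n + real t * triangle_weight n"
    then interpret extremal_cactus V E
      using sombor_le(2)[OF n] n assms(3,4) by unfold_locales auto
    show "graph_iso V E (H_vertices n) (H_edges n t)"
      using graph_iso_star_with_matching[OF star_with_matching] card_matching assms(3,4) by simp
  next
    assume iso: "graph_iso V E (H_vertices n) (H_edges n t)"
    note H = star_with_matching_H[OF t]
    have "sombor E = sombor (H_edges n t)"
      using sombor_graph_iso[OF simple star_with_matching_simple[OF H(1)] iso] .
    also have "\<dots> = (real n - 1 - 2 * real t) * pendant_edge_weight n + real t * triangle_weight n"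
      using sombor_star_with_matching[OF H(1)] H(2) t by (simp add: H_vertices_def of_nat_diff)
    finally show "sombor E = (real n - 1 - 2 * real t) * pendant_edge_weight n + real t * triangle_weight n" .
  qed
  then show ?thesis
    using sombor_le(1)[OF n] assms(3,4) bound by simp
qed

end
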